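(* Let $H$, $J$, $A$ and the Dirac operator $D=D_0+D_1+D_R$ be as in the context, and suppose $\alpha_{13}=\alpha_{14}=0$ and $\delta_{ij}=0$ for all $i\in\{1,2\}$, $j\in\{2,3,4\}$. Then the Hodge property $\mathcal{C}\ell_D(A)'=\mathcal{C}\ell_D(A)^\circ$ holds if and only if $\delta_{21}\neq 0$, $(\alpha_{23},\alpha_{24})\neq(0,0)$, and the matrix $\beta=\begin{bmatrix}\beta_{13}&\beta_{14}\\ \beta_{23}&\beta_{24}\end{bmatrix}$ has no zero row.
   Context: Let $H=M_4(\mathbb{C})\oplus M_4(\mathbb{C})$, with elements written as pairs $(v,w)$ and inner product $\langle (v,w),(v',w')\rangle=\mathrm{Tr}(v^*v')+\mathrm{Tr}(w^*w')$. Let $J$ be the antilinear isometry $J(v,w)=(w^*,v^* )$. Identify $\mathrm{End}_{\mathbb{C}}(H)$ with $M_4(\mathbb{C})\otimes M_2(\mathbb{C})\otimes M_4(\mathbb{C})$ via $\big(x\otimes\begin{bmatrix}a&b\\c&d\end{bmatrix}\otimes y\big)(v,w)=\big(x(av+bw)y^t,\ x(cv+dw)y^t\big)$. Here $e_{ij}$ denotes the matrix unit with $1$ in position $(i,j)$ (size clear from context) and $1$ the identity matrix. Let $A\cong\mathbb{C}\oplus\mathbb{H}\oplus M_3(\mathbb{C})$ be the real $*$-algebra of operators $\mathrm{diag}(\lambda,\bar\lambda,q)\otimes e_{11}\otimes 1+\mathrm{diag}(\lambda,m)\otimes e_{22}\otimes 1$, where $\lambda\in\mathbb{C}$, $q$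 is a quaternion viewed as a $2\times 2$ complex matrix $\begin{bmatrix}z&w\\-\bar w&\bar z\end{bmatrix}$, $m\in M_3(\mathbb{C})$, and $\mathrm{diag}$ denotes block-diagonal $4\times4$ matrices. Fix complex parameters $\alpha_{ij},\beta_{ij}$ ($i\in\{1,2\}$, $j\in\{3,4\}$), $\delta_{12},\delta_{13},\delta_{14},\delta_{21},\delta_{22},\delta_{23},\delta_{24}$ and $\Upsilon_R$. Put $\alpha=\begin{bmatrix}\alpha_{13}&\alpha_{14}\\ \alpha_{23}&\alpha_{24}\end{bmatrix}$, $\beta=\begin{bmatrix}\beta_{13}&\beta_{14}\\ \beta_{23}&\beta_{24}\end{bmatrix}$, $X_\alpha=\begin{bmatrix}0&\alpha\\ \alpha^*&0\end{bmatrix}\in M_4(\mathbb{C})$ (in $2\times2$ blocks), $X_\beta$ likewise, and $Y\in M_4(\mathbb{C})$ the matrix with first row $(0,\delta_{12},\delta_{13},\delta_{14})$, second row $(\delta_{21},\delta_{22},\delta_{23},\delta_{24})$ and zero third and fourth rows. Define $D_0=X_\alpha\otimes e_{11}\otimes e_{11}+X_\beta\otimes e_{11}\otimes(1-e_{11})+Y\otimes e_{12}\otimes e_{11}+Y^*\otimes e_{21}\otimes e_{11}$, $D_1=JD_0J^{-1}$, $D_R=e_{11}\otimes(\Upsilon_R e_{21}+\overline{\Upsilon}_R e_{12})\otimes e_{11}$, and $D=D_0+D_1+D_R$. For $\xi\in\mathrm{End}_{\mathbb{C}}(H)$ set $\xi^\circ=J\xi^*J^{-1}$, and for a subset $S$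 set $S^\circ=\{\xi^\circ:\xi\in S\}$ and $S'=\{\xi\in\mathrm{End}_{\mathbb{C}}(H): [\xi,\eta]=0\ \forall\eta\in S\}$. $\mathcal{C}\ell_D(A)$ is the complex $*$-subalgebra of $\mathrm{End}_{\mathbb{C}}(H)$ generated by $A$ and the operators $a[D,b]$, $a,b\in A$. The Hodge property means $\mathcal{C}\ell_D(A)'=\mathcal{C}\ell_D(A)^\circ$. *)

theory Defs
  imports "HOL-Analysis.Analysis"
begin

(* 
  Conventions.  Indices are 0-based: the paper's index 1 (resp. 2,3,4) is the element
  0 (resp. 1,2,3) of the numeral types 2 and 4.

  The Hilbert space H = M_4(C) + M_4(C) is represented by coordinates: a vector is a
  function on the index type idx = 2 x 4 x 4, where (k,i,j) is the (i,j) entry of the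
  k-th component (k = 0 for v, k = 1 for w).  The matrix units of the two summands form an
  orthonormal basis for the inner product Tr(v^H v') + Tr(w^* w'), which in these
  coordinates is the standard inner product.  Complex-linear endomorphisms of H are
  therefore the matrices  complex^idx^idx  (acting by *v), composition is ** and the
  Hilbert-space adjoint is the conjugate transpose.
 *)

type_synonym idx = "2 \<times> 4 \<times> 4"
type_synonym hvec = "complex ^ idx"
type_synonym op = "complex ^ idx ^ idx"

definition hinner :: "hvec \<Rightarrow> hvec \<Rightarrow> complex" where
  "hinner u u' = (\<Sum>a\<in>UNIV. cnj (u $ a) * u' $ a)"

definition cadj :: "complex ^ 'n ^ 'n \<Rightarrow> complex ^ 'n ^ 'n" where
  "cadj X = (\<chi> i j. cnj (X $ j $ i))"

definition emat :: "'n \<Rightarrow> 'n \<Rightarrow> complex ^ 'n ^ 'n" where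
  "emat p q = (\<chi> i j. if i = p \<and> j = q then 1 else 0)"

definition smat :: "complex \<Rightarrow> complex ^ 'n ^ 'n \<Rightarrow> complex ^ 'n ^ 'n" where
  "smat c X = (\<chi> i j. c * X $ i $ j)"

(* The identification x \<otimes> M \<otimes> y : (v,w) \<mapsto> (x(av+bw)y^t, x(cv+dw)y^t), written in coordinates. *)
definition kron3 :: "complex^4^4 \<Rightarrow> complex^2^2 \<Rightarrow> complex^4^4 \<Rightarrow> op" where
  "kron3 x M y = (\<chi> p q. M $ fst p $ fst q * x $ fst (snd p) $ fst (snd q)
                          * y $ snd (snd p) $ snd (snd q))"

(* The antilinear isometry J(v,w) = (w^H, v^H) (conjugate transposes). *)
definition Jv :: "hvec \<Rightarrow> hvec" where
  "Jv u = (\<chi> p. cnj (u $ (1 - fst p, snd (snd p), fst (snd p))))"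

definition op_of :: "(hvec \<Rightarrow> hvec) \<Rightarrow> op" where
  "op_of f = (\<chi> p q. f (axis q 1) $ p)"

definition Jconj :: "op \<Rightarrow> op" where
  "Jconj X = op_of (\<lambda>u. Jv (X *v (inv Jv u)))"

definition opp :: "op \<Rightarrow> op" where
  "opp X = Jconj (cadj X)"

definition commutant :: "op set \<Rightarrow> op set" where
  "commutant S = {X. \<forall>Y\<in>S. X ** Y = Y ** X}"

inductive_set star_alg_gen :: "op set \<Rightarrow> op set" for S where
  gen: "X \<in> S \<Longrightarrow> X \<in> star_alg_gen S"
| add: "X \<in> star_alg_gen S \<Longrightarrow> Y \<in> star_alg_gen S \<Longrightarrow> X + Y \<in> star_alg_gen S"
| smult: "X \<in> star_alg_gen S \<Longrightarrow> smat c X \<in> star_alg_gen S"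
| mult: "X \<in> star_alg_gen S \<Longrightarrow> Y \<in> star_alg_gen S \<Longrightarrow> X ** Y \<in> star_alg_gen S"
| adj: "X \<in> star_alg_gen S \<Longrightarrow> cadj X \<in> star_alg_gen S"

definition diag1 :: "complex \<Rightarrow> complex \<Rightarrow> complex \<Rightarrow> complex^4^4" where
  "diag1 l z w = (\<chi> i j.
     if i = 0 \<and> j = 0 then l
     else if i = 1 \<and> j = 1 then cnj l
     else if i = 2 \<and> j = 2 then z
     else if i = 2 \<and> j = 3 then w
     else if i = 3 \<and> j = 2 then - cnj w
     else if i = 3 \<and> j = 3 then cnj z
     else 0)"

(* diag(\<lambda>, m): m in M_3(C) is the lower-right 3x3 block (indices 1..3) of an
  arbitrary 4x4 matrix m; ranging over all m gives all of M_3(C). *)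
definition diag2 :: "complex \<Rightarrow> complex^4^4 \<Rightarrow> complex^4^4" where
  "diag2 l m = (\<chi> i j. if i = 0 \<and> j = 0 then l
                        else if i \<noteq> 0 \<and> j \<noteq> 0 then m $ i $ j else 0)"

definition algA :: "op set" where
  "algA = {kron3 (diag1 l z w) (emat 0 0) (mat 1) + kron3 (diag2 l m) (emat 1 1) (mat 1)
           | l z w m. True}"

definition Xmat :: "complex \<Rightarrow> complex \<Rightarrow> complex \<Rightarrow> complex \<Rightarrow> complex^4^4" where
  "Xmat p q r s = (\<chi> i j.
     if i = 0 \<and> j = 2 then p
     else if i = 0 \<and> j = 3 then q
     else if i = 1 \<and> j = 2 then r
     else if i = 1 \<and> j = 3 then s
     else if i = 2 \<and> j = 0 then cnj p
     else if i = 3 \<and> j = 0 then cnj q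
     else if i = 2 \<and> j = 1 then cnj r
     else if i = 3 \<and> j = 1 then cnj s
     else 0)"

definition Ymat :: "complex \<Rightarrow> complex \<Rightarrow> complex \<Rightarrow> complex \<Rightarrow> complex \<Rightarrow> complex \<Rightarrow> complex
                    \<Rightarrow> complex^4^4" where
  "Ymat d12 d13 d14 d21 d22 d23 d24 = (\<chi> i j.
     if i = 0 then (if j = 1 then d12 else if j = 2 then d13 else if j = 3 then d14 else 0)
     else if i = 1 then (if j = 0 then d21 else if j = 1 then d22 else if j = 2 then d23 else d24)
     else 0)"

definition D0 :: "complex^4^4 \<Rightarrow> complex^4^4 \<Rightarrow> complex^4^4 \<Rightarrow> op" where
  "D0 Xa Xb Y = kron3 Xa (emat 0 0) (emat 0 0) + kron3 Xb (emat 0 0) (mat 1 - emat 0 0)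
              + kron3 Y (emat 0 1) (emat 0 0) + kron3 (cadj Y) (emat 1 0) (emat 0 0)"

definition DR :: "complex \<Rightarrow> op" where
  "DR u = kron3 (emat 0 0) (smat u (emat 1 0) + smat (cnj u) (emat 0 1)) (emat 0 0)"

definition Dirac :: "complex^4^4 \<Rightarrow> complex^4^4 \<Rightarrow> complex^4^4 \<Rightarrow> complex \<Rightarrow> op" where
  "Dirac Xa Xb Y u = D0 Xa Xb Y + Jconj (D0 Xa Xb Y) + DR u"

definition ClD :: "op \<Rightarrow> op set" where
  "ClD D = star_alg_gen (algA \<union> {a ** (D ** b - b ** D) | a b. a \<in> algA \<and> b \<in> algA})"

definition hodge :: "op \<Rightarrow> bool" where
  "hodge D \<longleftrightarrow> commutant (ClD D) = opp ` ClD D"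

end

theory Submission
  imports Defs
begin

(* In each case considered, Cl_D(A) lies in an explicit multi-matrix algebra
   B = (+)_b M_(n_b) (x) 1_(m_b), given by labelling the standard basis of H by a block, a position
   and a copy.  The commutant of B is the block algebra with positions and copies exchanged, and
   xi |-> J xi^* J^-1 transports labellings along the permutation of the basis induced by J.
   If delta_21, (alpha_23, alpha_24) and both rows of beta are nonzero, the commutators of D with A
   produce all matrix units of B, so Cl_D(A) = B; as J exchanges the positions and copies of B, this
   is the Hodge property.  If one of them vanishes, Cl_D(A) lies in a finer block algebra B' with a
   diagonal projection P in its commutant, hence in Cl_D(A)', whereas J P J^-1 is not even in B'. *)

lemma UNIV_4: "(UNIV :: 4 set) = {0, 1, 2, 3}"
proof (rule set_eqI)
  fix x :: 4
  show "x \<in> UNIV \<longleftrightarrow> x \<in> {0, 1, 2, 3}"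
    using exhaust_4[of x] by auto
qed

lemma UNIV_2: "(UNIV :: 2 set) = {0, 1}"
proof (rule set_eqI)
  fix x :: 2
  show "x \<in> UNIV \<longleftrightarrow> x \<in> {0, 1}"
    using exhaust_2[of x] by auto
qed

lemma sum_UNIV_4: "sum f (UNIV :: 4 set) = f 0 + f 1 + f 2 + f 3"
  unfolding UNIV_4 by (simp add: add.assoc)

lemma sum_UNIV_2: "sum f (UNIV :: 2 set) = f 0 + f 1"
  unfolding UNIV_2 by simp

lemma sum_UNIV_idx:
  "sum f (UNIV :: idx set) = (\<Sum>k\<in>UNIV. \<Sum>i\<in>UNIV. \<Sum>j\<in>UNIV. f (k, i, j))"
proof -
  have "sum f (UNIV :: idx set) = (\<Sum>k\<in>UNIV. \<Sum>p\<in>UNIV. f (k, p))"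
    by (subst sum.cartesian_product) simp
  also have "\<dots> = (\<Sum>k\<in>UNIV. \<Sum>i\<in>UNIV. \<Sum>j\<in>UNIV. f (k, i, j))"
    by (subst sum.cartesian_product) simp
  finally show ?thesis .
qed

lemma matrix_mult_apply: "(A ** B) $ i $ j = (\<Sum>k\<in>UNIV. A $ i $ k * B $ k $ j)"
  by (simp add: matrix_matrix_mult_def)

lemma emat_apply: "emat p q $ i $ j = (if i = p \<and> j = q then 1 else 0)"
  by (simp add: emat_def)

lemma smat_apply: "smat c X $ i $ j = c * X $ i $ j"
  by (simp add: smat_def)

lemma cadj_apply: "cadj X $ i $ j = cnj (X $ j $ i)"
  by (simp add: cadj_def)

lemma mat_1_apply: "(mat 1 :: complex^'n^'n) $ i $ j = (if i = j then 1 else 0)"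
  by (simp add: mat_def)

lemma kron3_apply:
  "kron3 x M y $ p $ q = M $ fst p $ fst q * x $ fst (snd p) $ fst (snd q) * y $ snd (snd p) $ snd (snd q)"
  by (simp add: kron3_def)

lemma matrix_eqI: "\<forall>i j. (A :: 'a^'n^'m) $ i $ j = B $ i $ j \<Longrightarrow> A = B"
  by (simp add: vec_eq_iff)

lemma m4_eqI:
  "(\<And>i j. i \<in> {0, 1, 2, 3} \<Longrightarrow> j \<in> {0, 1, 2, 3} \<Longrightarrow> (x :: complex^4^4) $ i $ j = y $ i $ j) \<Longrightarrow> x = y"
  by (simp add: vec_eq_iff UNIV_4[symmetric])

lemma m2_eqI:
  "(\<And>i j. i \<in> {0, 1} \<Longrightarrow> j \<in> {0, 1} \<Longrightarrow> (x :: complex^2^2) $ i $ j = y $ i $ j) \<Longrightarrow> x = y"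
  by (simp add: vec_eq_iff UNIV_2[symmetric])

lemma smat_add: "smat c (A + B) = smat c A + smat c B"
  and smat_diff: "smat c (A - B) = smat c A - smat c B"
  and smat_smat: "smat c (smat d A) = smat (c * d) A"
  and smat_1: "smat 1 A = A"
  and smat_0: "smat 0 A = 0"
  and smat_zero: "smat c 0 = 0"
  and smat_add_left: "smat c A + smat d A = smat (c + d) A"
  and smat_minus_1: "X - Y = X + smat (-1) Y"
  by (simp_all add: vec_eq_iff smat_apply algebra_simps)

lemma smat_mult_left: "smat c A ** B = smat c (A ** B)"
  and smat_mult_right: "A ** smat c B = smat c (A ** B)"
  by (simp_all add: vec_eq_iff smat_apply matrix_mult_apply sum_distrib_left algebra_simps)

lemma smat_cancel: "c \<noteq> 0 \<Longrightarrow> smat (1 / c) (smat c X) = X"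
  by (simp add: smat_smat smat_1)

lemma matrix_mult_diff_left: "A ** (B - C) = A ** B - A ** (C :: complex^'n^'n)"
  and matrix_mult_diff_right: "(A - B) ** C = A ** C - B ** (C :: complex^'n^'n)"
  and matrix_mult_add_right: "(A + B) ** C = A ** C + B ** (C :: complex^'n^'n)"
  by (simp_all add: vec_eq_iff matrix_mult_apply algebra_simps sum_subtractf sum.distrib)

lemma cadj_emat: "cadj (emat p q) = emat q p"
  by (auto simp add: vec_eq_iff cadj_apply emat_apply)

lemma emat_mult: "emat a b ** emat c d = (if b = c then emat a d else 0)"
  by (auto simp: vec_eq_iff matrix_mult_apply emat_apply if_distrib[of "\<lambda>x. x * _"] sum.delta'
      cong: if_cong)

lemma emat_mult_mult: "(emat i j ** X) ** emat k l = smat (X $ j $ k) (emat i l :: complex^'n^'n)"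
  by (auto simp: vec_eq_iff matrix_mult_apply emat_apply smat_apply if_distrib[of "\<lambda>x. x * _"]
      if_distrib[of "\<lambda>x. _ * x"] sum.delta' cong: if_cong)

lemma emat_mult_mult': "emat i j ** (X ** emat k l) = smat (X $ j $ k) (emat i l :: complex^'n^'n)"
  by (simp add: matrix_mul_assoc emat_mult_mult)

lemma emat_mult_assoc: "emat a b ** (emat c d ** X) = (if b = c then emat a d ** X else (0::complex^'n^'n))"
  by (simp add: matrix_mul_assoc emat_mult)

lemma mult_emat_assoc: "(X ** emat a b) ** emat c d = (if b = c then X ** emat a d else (0::complex^'n^'n))"
  by (simp add: matrix_mul_assoc[symmetric] emat_mult)

lemma op_eqI:
  "(\<And>k i j k' i' j'. (X :: op) $ (k, i, j) $ (k', i', j') = Y $ (k, i, j) $ (k', i', j')) \<Longrightarrow> X = Y"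
  by (simp add: vec_eq_iff)

lemma kron3_mult: "kron3 x M y ** kron3 x' M' y' = kron3 (x ** x') (M ** M') (y ** y')"
proof (rule op_eqI)
  fix k i j k' i' j'
  have "(kron3 x M y ** kron3 x' M' y') $ (k, i, j) $ (k', i', j') =
     (\<Sum>a\<in>UNIV. \<Sum>b\<in>UNIV. \<Sum>c\<in>UNIV.
        (M $ k $ a * M' $ a $ k') * (x $ i $ b * x' $ b $ i') * (y $ j $ c * y' $ c $ j'))"
    unfolding matrix_mult_apply sum_UNIV_idx by (intro sum.cong refl) (simp add: kron3_apply mult_ac)
  also have "\<dots> = kron3 (x ** x') (M ** M') (y ** y') $ (k, i, j) $ (k', i', j')"
    by (simp add: kron3_apply matrix_mult_apply sum_product sum_distrib_left sum_distrib_right mult_ac)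
  finally show "(kron3 x M y ** kron3 x' M' y') $ (k, i, j) $ (k', i', j') =
      kron3 (x ** x') (M ** M') (y ** y') $ (k, i, j) $ (k', i', j')" .
qed

lemma kron3_add1: "kron3 (x + x') M y = kron3 x M y + kron3 x' M y"
  and kron3_add2: "kron3 x (M + M') y = kron3 x M y + kron3 x M' y"
  and kron3_add3: "kron3 x M (y + y') = kron3 x M y + kron3 x M y'"
  and kron3_diff1: "kron3 (x - x') M y = kron3 x M y - kron3 x' M y"
  and kron3_diff3: "kron3 x M (y - y') = kron3 x M y - kron3 x M y'"
  and kron3_zero1: "kron3 0 M y = 0"
  and kron3_zero2: "kron3 x 0 y = 0"
  and kron3_zero3: "kron3 x M 0 = 0"
  and kron3_smat1: "kron3 (smat c x) M y = smat c (kron3 x M y)"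
  and kron3_smat2: "kron3 x (smat c M) y = smat c (kron3 x M y)"
  and kron3_smat3: "kron3 x M (smat c y) = smat c (kron3 x M y)"
  by (simp_all add: vec_eq_iff kron3_apply smat_apply algebra_simps)

lemma cadj_kron3: "cadj (kron3 x M y) = kron3 (cadj x) (cadj M) (cadj y)"
  by (simp add: vec_eq_iff cadj_apply kron3_apply)

lemmas kron3_simps = kron3_mult emat_mult matrix_add_ldistrib matrix_mult_add_right
  matrix_mult_diff_left matrix_mult_diff_right kron3_zero1 kron3_zero2 kron3_zero3
  kron3_add1 kron3_add2 kron3_add3 kron3_smat1 kron3_smat2 kron3_smat3
  smat_add smat_mult_left smat_mult_right matrix_mul_lid matrix_mul_rid smat_0 smat_zero

definition sw :: "idx \<Rightarrow> idx" where
  "sw p = (1 - fst p, snd (snd p), fst (snd p))"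

lemma sw_sw [simp]: "sw (sw p) = p"
  by (cases p) (simp add: sw_def)

lemma Jv_apply: "Jv u $ p = cnj (u $ sw p)"
  by (simp add: Jv_def sw_def)

lemma inv_Jv: "inv Jv = Jv"
  by (intro inv_equality) (simp_all add: vec_eq_iff Jv_apply)

lemma Jconj_apply: "Jconj X $ p $ q = cnj (X $ sw p $ sw q)"
proof -
  have "(X *v Jv (axis q 1)) $ sw p = (\<Sum>r\<in>UNIV. X $ sw p $ r * (if r = sw q then 1 else 0))"
    unfolding matrix_vector_mult_def by (auto intro!: sum.cong simp add: Jv_apply axis_def)
  also have "\<dots> = X $ sw p $ sw q"
    by (simp add: if_distrib[of "\<lambda>x. _ * x"] sum.delta' cong: if_cong)
  finally show ?thesis
    by (simp add: Jconj_def op_of_def inv_Jv Jv_apply)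
qed

lemma opp_apply: "opp X $ p $ q = X $ sw q $ sw p"
  by (simp add: opp_def Jconj_apply cadj_apply)

lemma opp_opp: "opp (opp X) = X"
  by (simp add: vec_eq_iff opp_apply)

definition cmat :: "complex^'n^'n \<Rightarrow> complex^'n^'n" where
  "cmat x = (\<chi> i j. cnj (x $ i $ j))"

definition flipc :: "complex^2^2 \<Rightarrow> complex^2^2" where
  "flipc M = (\<chi> k k'. cnj (M $ (1 - k) $ (1 - k')))"

lemma Jconj_kron3: "Jconj (kron3 x M y) = kron3 (cmat y) (flipc M) (cmat x)"
  by (simp add: vec_eq_iff Jconj_apply kron3_apply sw_def cmat_def flipc_def mult_ac)

lemma Jconj_add: "Jconj (A + B) = Jconj A + Jconj B"
  by (simp add: vec_eq_iff Jconj_apply)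

lemma idx_cases_all:
  fixes P :: "idx \<Rightarrow> bool"
  assumes "\<And>k i j. k \<in> {0, 1} \<Longrightarrow> i \<in> {0, 1, 2, 3} \<Longrightarrow> j \<in> {0, 1, 2, 3} \<Longrightarrow> P (k, i, j)"
  shows "\<forall>p. P p"
proof
  fix p :: idx
  obtain k i j where "p = (k, i, j)" by (cases p) auto
  then show "P p" by (simp add: assms UNIV_2[symmetric] UNIV_4[symmetric])
qed

lemma idx_pair_cases_all:
  fixes P :: "idx \<Rightarrow> idx \<Rightarrow> bool"
  assumes "\<And>k i j k' i' j'. k \<in> {0, 1} \<Longrightarrow> i \<in> {0, 1, 2, 3} \<Longrightarrow> j \<in> {0, 1, 2, 3} \<Longrightarrow>
      k' \<in> {0, 1} \<Longrightarrow> i' \<in> {0, 1, 2, 3} \<Longrightarrow> j' \<in> {0, 1, 2, 3} \<Longrightarrow> P (k, i, j) (k', i', j')"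
  shows "\<forall>p q. P p q"
proof (intro allI)
  fix p q :: idx
  obtain k i j where "p = (k, i, j)" by (cases p) auto
  moreover obtain k' i' j' where "q = (k', i', j')" by (cases q) auto
  ultimately show "P p q" by (simp add: assms UNIV_2[symmetric] UNIV_4[symmetric])
qed

text \<open>Rewrite rules that let \<open>simp only\<close> decide the ground instances produced by the rules
  above; full \<open>simp\<close> is far too slow on the thousand-odd cases.\<close>

lemma numeral_neq_2_4:
  "(0::4) \<noteq> 1" "(0::4) \<noteq> 2" "(0::4) \<noteq> 3" "(1::4) \<noteq> 2" "(1::4) \<noteq> 3" "(2::4) \<noteq> 3"
  "(1::4) \<noteq> 0" "(2::4) \<noteq> 0" "(3::4) \<noteq> 0" "(2::4) \<noteq> 1" "(3::4) \<noteq> 1" "(3::4) \<noteq> 2"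
  "(0::2) \<noteq> 1" "(1::2) \<noteq> 0" "(1::2) - 0 = 1" "(1::2) - 1 = 0"
  by simp_all

lemma numeral_neq_nat:
  "(0::nat) \<noteq> 1" "(0::nat) \<noteq> 2" "(0::nat) \<noteq> 3" "(0::nat) \<noteq> 4" "(0::nat) \<noteq> 5" "(0::nat) \<noteq> 6" "(0::nat) \<noteq> 7"
  "(1::nat) \<noteq> 2" "(1::nat) \<noteq> 3" "(1::nat) \<noteq> 4" "(1::nat) \<noteq> 5" "(1::nat) \<noteq> 6" "(1::nat) \<noteq> 7"
  "(2::nat) \<noteq> 3" "(2::nat) \<noteq> 4" "(2::nat) \<noteq> 5" "(2::nat) \<noteq> 6" "(2::nat) \<noteq> 7"
  "(3::nat) \<noteq> 4" "(3::nat) \<noteq> 5" "(3::nat) \<noteq> 6" "(3::nat) \<noteq> 7"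
  "(4::nat) \<noteq> 5" "(4::nat) \<noteq> 6" "(4::nat) \<noteq> 7" "(5::nat) \<noteq> 6" "(5::nat) \<noteq> 7" "(6::nat) \<noteq> 7"
  by simp_all

lemmas enum_simps = numeral_neq_2_4 numeral_neq_nat numeral_neq_nat[THEN not_sym]
  if_True if_False fst_conv snd_conv prod.inject simp_thms refl

section \<open>Block algebras\<close>

(* An index p lies in block bl p, at position ps p within copy cp p of that block; block_alg is
   the multi-matrix algebra of the operators acting on each block as M \<otimes> 1, with M acting on
   positions and the identity on copies. *)
definition block_alg :: "('i::finite \<Rightarrow> nat) \<Rightarrow> ('i \<Rightarrow> nat) \<Rightarrow> ('i \<Rightarrow> nat) \<Rightarrow> (complex^'i^'i) set" where
  "block_alg bl ps cp = {M. \<exists>F. \<forall>p q. M $ p $ q =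
     (if bl p = bl q \<and> cp p = cp q then F (bl p) (ps p) (ps q) else 0)}"

(* The coordinates (bl, ps, cp) are injective, and every block is a full grid:
   pt p c is the index with the block and position of p and the copy of c. *)
definition regular_blocks ::
    "('i::finite \<Rightarrow> nat) \<Rightarrow> ('i \<Rightarrow> nat) \<Rightarrow> ('i \<Rightarrow> nat) \<Rightarrow> ('i \<Rightarrow> 'i \<Rightarrow> 'i) \<Rightarrow> bool" where
  "regular_blocks bl ps cp pt \<longleftrightarrow>
     (\<forall>p q. bl p = bl q \<and> ps p = ps q \<and> cp p = cp q \<longrightarrow> p = q) \<and>
     (\<forall>p c. bl p = bl c \<longrightarrow> bl (pt p c) = bl p \<and> ps (pt p c) = ps p \<and> cp (pt p c) = cp c)"

lemma regular_blocks_inj: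
  "regular_blocks bl ps cp pt \<Longrightarrow> bl p = bl q \<Longrightarrow> ps p = ps q \<Longrightarrow> cp p = cp q \<Longrightarrow> p = q"
  unfolding regular_blocks_def by blast

lemma regular_blocks_pt:
  "regular_blocks bl ps cp pt \<Longrightarrow> bl p = bl c \<Longrightarrow>
     bl (pt p c) = bl p \<and> ps (pt p c) = ps p \<and> cp (pt p c) = cp c"
  unfolding regular_blocks_def by blast

lemma block_algI:
  "(\<And>p q. M $ p $ q = (if bl p = bl q \<and> cp p = cp q then F (bl p) (ps p) (ps q) else 0)) \<Longrightarrow>
     M \<in> block_alg bl ps cp"
  unfolding block_alg_def by blast

lemma block_algE:
  assumes "M \<in> block_alg bl ps cp"
  obtains F where
    "\<And>p q. M $ p $ q = (if bl p = bl q \<and> cp p = cp q then F (bl p) (ps p) (ps q) else 0)"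
  using assms unfolding block_alg_def by blast

lemma sum_UNIV_single: "(\<And>r. r \<noteq> r0 \<Longrightarrow> f r = 0) \<Longrightarrow> sum f (UNIV :: 'a::finite set) = f r0"
  by (rule sum.mono_neutral_right[where S = "{r0}", simplified]) auto

lemma block_alg_add:
  assumes "M \<in> block_alg bl ps cp" and "N \<in> block_alg bl ps cp"
  shows "M + N \<in> block_alg bl ps cp"
proof -
  obtain F where F: "\<And>p q. M $ p $ q = (if bl p = bl q \<and> cp p = cp q then F (bl p) (ps p) (ps q) else 0)"
    using assms(1) by (rule block_algE) blast
  obtain G where G: "\<And>p q. N $ p $ q = (if bl p = bl q \<and> cp p = cp q then G (bl p) (ps p) (ps q) else 0)"
    using assms(2) by (rule block_algE) blast
  show ?thesis by (rule block_algI[where F = "\<lambda>b x y. F b x y + G b x y"]) (simp add: F G)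
qed

lemma block_alg_smat:
  assumes "M \<in> block_alg bl ps cp"
  shows "smat c M \<in> block_alg bl ps cp"
proof -
  obtain F where F: "\<And>p q. M $ p $ q = (if bl p = bl q \<and> cp p = cp q then F (bl p) (ps p) (ps q) else 0)"
    using assms by (rule block_algE) blast
  show ?thesis by (rule block_algI[where F = "\<lambda>b x y. c * F b x y"]) (simp add: F smat_apply)
qed

lemma block_alg_cadj:
  assumes "M \<in> block_alg bl ps cp"
  shows "cadj M \<in> block_alg bl ps cp"
proof -
  obtain F where F: "\<And>p q. M $ p $ q = (if bl p = bl q \<and> cp p = cp q then F (bl p) (ps p) (ps q) else 0)"
    using assms by (rule block_algE) blast
  show ?thesis by (rule block_algI[where F = "\<lambda>b x y. cnj (F b y x)"]) (auto simp: F cadj_apply)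
qed

lemma block_alg_mult:
  assumes reg: "regular_blocks bl ps cp pt"
    and M: "M \<in> block_alg bl ps cp" and N: "N \<in> block_alg bl ps cp"
  shows "M ** N \<in> block_alg bl ps cp"
proof -
  obtain F where F: "\<And>p q. M $ p $ q = (if bl p = bl q \<and> cp p = cp q then F (bl p) (ps p) (ps q) else 0)"
    using M by (rule block_algE) blast
  obtain G where G: "\<And>p q. N $ p $ q = (if bl p = bl q \<and> cp p = cp q then G (bl p) (ps p) (ps q) else 0)"
    using N by (rule block_algE) blast
  define H where "H b x y = (\<Sum>t\<in>ps ` {r. bl r = b}. F b x t * G b t y)" for b x y
  show ?thesis
  proof (rule block_algI[where F = H])
    fix p q
    show "(M ** N) $ p $ q = (if bl p = bl q \<and> cp p = cp q then H (bl p) (ps p) (ps q) else 0)"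
    proof (cases "bl p = bl q \<and> cp p = cp q")
      case True
      let ?R = "{r. bl r = bl p \<and> cp r = cp p}"
      have "(M ** N) $ p $ q = (\<Sum>r\<in>?R. M $ p $ r * N $ r $ q)"
        unfolding matrix_mult_apply by (rule sum.mono_neutral_right) (auto simp: F)
      also have "\<dots> = (\<Sum>r\<in>?R. F (bl p) (ps p) (ps r) * G (bl p) (ps r) (ps q))"
        by (rule sum.cong) (use True in \<open>auto simp: F G\<close>)
      also have "\<dots> = (\<Sum>t\<in>ps ` ?R. F (bl p) (ps p) t * G (bl p) t (ps q))"
      proof (rule sum.reindex_cong[symmetric, where l = ps])
        show "inj_on ps ?R" by (rule inj_onI) (rule regular_blocks_inj[OF reg]; simp)
      qed simp_all
      also have "ps ` ?R = ps ` {r. bl r = bl p}"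
      proof
        show "ps ` {r. bl r = bl p} \<subseteq> ps ` ?R"
        proof
          fix t assume "t \<in> ps ` {r. bl r = bl p}"
          then obtain r where "bl r = bl p" "t = ps r" by auto
          then have "pt r p \<in> ?R" "ps (pt r p) = t" using regular_blocks_pt[OF reg, of r p] by auto
          then show "t \<in> ps ` ?R" by (metis image_eqI)
        qed
      qed auto
      finally show ?thesis using True by (simp add: H_def)
    next
      case False
      then show ?thesis unfolding matrix_mult_apply by (auto simp: F G intro!: sum.neutral)
    qed
  qed
qed

lemma star_alg_gen_block_alg:
  assumes reg: "regular_blocks bl ps cp pt" and S: "S \<subseteq> block_alg bl ps cp"
  shows "star_alg_gen S \<subseteq> block_alg bl ps cp"
proof
  fix X assume "X \<in> star_alg_gen S"
  then show "X \<in> block_alg bl ps cp"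
    by (induction rule: star_alg_gen.induct)
       (use S in \<open>auto intro: block_alg_add block_alg_smat block_alg_cadj block_alg_mult[OF reg]\<close>)
qed

lemma block_alg_commute:
  assumes reg: "regular_blocks bl ps cp pt"
    and X: "X \<in> block_alg bl cp ps" and M: "M \<in> block_alg bl ps cp"
  shows "X ** M = M ** X"
proof -
  obtain F where F: "\<And>p q. M $ p $ q = (if bl p = bl q \<and> cp p = cp q then F (bl p) (ps p) (ps q) else 0)"
    using M by (rule block_algE) blast
  obtain G where G: "\<And>p q. X $ p $ q = (if bl p = bl q \<and> ps p = ps q then G (bl p) (cp p) (cp q) else 0)"
    using X by (rule block_algE) blast
  have "(X ** M) $ p $ q = (M ** X) $ p $ q" for p q
  proof (cases "bl p = bl q")
    case True
    have "(X ** M) $ p $ q = X $ p $ pt p q * M $ pt p q $ q"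
      unfolding matrix_mult_apply
      by (rule sum_UNIV_single)
         (use True regular_blocks_inj[OF reg] regular_blocks_pt[OF reg, of p q] in \<open>auto simp: F G\<close>)
    moreover have "(M ** X) $ p $ q = M $ p $ pt q p * X $ pt q p $ q"
      unfolding matrix_mult_apply
      by (rule sum_UNIV_single)
         (use True regular_blocks_inj[OF reg] regular_blocks_pt[OF reg, of q p] in \<open>auto simp: F G\<close>)
    ultimately show ?thesis
      using True regular_blocks_pt[OF reg, of p q] regular_blocks_pt[OF reg, of q p] by (simp add: F G)
  next
    case False
    then have "(X ** M) $ p $ q = 0" and "(M ** X) $ p $ q = 0"
      unfolding matrix_mult_apply by (auto simp: F G intro!: sum.neutral)
    then show ?thesis by simp
  qed
  then show ?thesis by (simp add: vec_eq_iff)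
qed

definition block_unit :: "('i::finite \<Rightarrow> nat) \<Rightarrow> ('i \<Rightarrow> nat) \<Rightarrow> ('i \<Rightarrow> nat) \<Rightarrow> nat \<Rightarrow> nat \<Rightarrow> nat \<Rightarrow> complex^'i^'i" where
  "block_unit bl ps cp b x y =
     (\<chi> p q. if bl p = b \<and> bl q = b \<and> cp p = cp q \<and> ps p = x \<and> ps q = y then 1 else 0)"

lemma block_unit_in_block_alg: "block_unit bl ps cp b x y \<in> block_alg bl ps cp"
  by (rule block_algI[where F = "\<lambda>b' x' y'. if b' = b \<and> x' = x \<and> y' = y then 1 else 0"])
     (auto simp: block_unit_def)

lemma mult_block_unit_apply:
  assumes reg: "regular_blocks bl ps cp pt" and q': "bl q' = b" "ps q' = x"
  shows "(X ** block_unit bl ps cp b x y) $ p $ q = (if bl q = b \<and> ps q = y then X $ p $ pt q' q else 0)"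
proof (cases "bl q = b \<and> ps q = y")
  case True
  have "(X ** block_unit bl ps cp b x y) $ p $ q = X $ p $ pt q' q * block_unit bl ps cp b x y $ pt q' q $ q"
    unfolding matrix_mult_apply
    by (rule sum_UNIV_single)
       (use True q' regular_blocks_inj[OF reg] regular_blocks_pt[OF reg, of q' q] in \<open>auto simp: block_unit_def\<close>)
  then show ?thesis using True q' regular_blocks_pt[OF reg, of q' q] by (simp add: block_unit_def)
next
  case False
  then show ?thesis unfolding matrix_mult_apply by (auto simp: block_unit_def intro!: sum.neutral)
qed

lemma block_unit_mult_apply:
  assumes reg: "regular_blocks bl ps cp pt" and q': "bl q' = b" "ps q' = y"
  shows "(block_unit bl ps cp b x y ** X) $ p $ q = (if bl p = b \<and> ps p = x then X $ pt q' p $ q else 0)"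
proof (cases "bl p = b \<and> ps p = x")
  case True
  have "(block_unit bl ps cp b x y ** X) $ p $ q = block_unit bl ps cp b x y $ p $ pt q' p * X $ pt q' p $ q"
    unfolding matrix_mult_apply
    by (rule sum_UNIV_single)
       (use True q' regular_blocks_inj[OF reg] regular_blocks_pt[OF reg, of q' p] in \<open>auto simp: block_unit_def\<close>)
  then show ?thesis using True q' regular_blocks_pt[OF reg, of q' p] by (simp add: block_unit_def)
next
  case False
  then show ?thesis unfolding matrix_mult_apply by (auto simp: block_unit_def intro!: sum.neutral)
qed

lemma commutes_block_units_entry_eq_0:
  assumes reg: "regular_blocks bl ps cp pt"
    and XU: "\<And>b x y. X ** block_unit bl ps cp b x y = block_unit bl ps cp b x y ** X"
    and pq: "\<not> (bl p = bl q \<and> ps p = ps q)"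
  shows "X $ p $ q = 0"
proof -
  have "pt q q = q"
    using regular_blocks_inj[OF reg, of "pt q q" q] regular_blocks_pt[OF reg, of q q] by simp
  then have "X $ p $ q = (X ** block_unit bl ps cp (bl q) (ps q) (ps q)) $ p $ q"
    using mult_block_unit_apply[OF reg, where q' = q and p = p and q = q and X = X and y = "ps q"] by simp
  also have "\<dots> = (block_unit bl ps cp (bl q) (ps q) (ps q) ** X) $ p $ q"
    by (simp add: XU)
  also have "\<dots> = 0"
    using block_unit_mult_apply[OF reg, where q' = q and p = p and q = q and X = X and x = "ps q"] pq by auto
  finally show ?thesis .
qed

lemma commutes_block_units_entry_shift:
  assumes reg: "regular_blocks bl ps cp pt"
    and XU: "\<And>b x y. X ** block_unit bl ps cp b x y = block_unit bl ps cp b x y ** X"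
    and pq: "bl p = bl q" "ps p = ps q" and r: "bl r = bl p"
  shows "X $ p $ q = X $ pt r p $ pt r q"
proof -
  have q': "bl (pt r q) = bl p" "ps (pt r q) = ps r" "cp (pt r q) = cp q"
    using regular_blocks_pt[OF reg, of r q] pq r by auto
  have "pt q (pt r q) = q"
    using regular_blocks_pt[OF reg, of q "pt r q"] q' pq regular_blocks_inj[OF reg, of "pt q (pt r q)" q]
    by auto
  then have "X $ p $ q = (X ** block_unit bl ps cp (bl p) (ps p) (ps r)) $ p $ pt r q"
    using mult_block_unit_apply[OF reg, where q' = q and p = p and q = "pt r q" and X = X and y = "ps r"]
      q' pq by simp
  also have "\<dots> = (block_unit bl ps cp (bl p) (ps p) (ps r) ** X) $ p $ pt r q"
    by (simp add: XU)
  also have "\<dots> = X $ pt r p $ pt r q"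
  proof -
    have "pt (pt r q) p = pt r p"
      using regular_blocks_pt[OF reg, of "pt r q" p] regular_blocks_pt[OF reg, of r p] q' r
      by (intro regular_blocks_inj[OF reg]) simp_all
    then show ?thesis
      using block_unit_mult_apply[OF reg, where q' = "pt r q" and p = p and q = "pt r q" and X = X
          and x = "ps p"] q' by simp
  qed
  finally show ?thesis .
qed

lemma commutant_block_alg_subset:
  assumes reg: "regular_blocks bl ps cp pt"
    and X: "\<And>M. M \<in> block_alg bl ps cp \<Longrightarrow> X ** M = M ** X"
  shows "X \<in> block_alg bl cp ps"
proof -
  have XU: "X ** block_unit bl ps cp b x y = block_unit bl ps cp b x y ** X" for b x y
    using X block_unit_in_block_alg by blast
  define r0 where "r0 b = (SOME r. bl r = b)" for b
  define cw where "cw b c = (SOME r. bl r = b \<and> cp r = c)" for b c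
  have r0: "bl (r0 (bl p)) = bl p" for p
    unfolding r0_def by (rule someI) simp
  have cw: "bl (cw (bl p) (cp p)) = bl p \<and> cp (cw (bl p) (cp p)) = cp p" for p
    unfolding cw_def by (rule someI) simp
  have pt_cw: "pt (r0 (bl p)) (cw (bl p) (cp p)) = pt (r0 (bl p)) p" for p
    using regular_blocks_pt[OF reg, of "r0 (bl p)" "cw (bl p) (cp p)"]
      regular_blocks_pt[OF reg, of "r0 (bl p)" p] r0[of p] cw[of p]
    by (intro regular_blocks_inj[OF reg]) simp_all
  show ?thesis
  proof (rule block_algI[where F = "\<lambda>b c c'. X $ pt (r0 b) (cw b c) $ pt (r0 b) (cw b c')"])
    fix p q
    show "X $ p $ q = (if bl p = bl q \<and> ps p = ps q
        then X $ pt (r0 (bl p)) (cw (bl p) (cp p)) $ pt (r0 (bl p)) (cw (bl p) (cp q)) else 0)"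
    proof (cases "bl p = bl q \<and> ps p = ps q")
      case True
      then show ?thesis
        using commutes_block_units_entry_shift[OF reg XU, of p q "r0 (bl p)"] r0[of p] pt_cw[of p] pt_cw[of q]
        by simp
    next
      case False
      show ?thesis
        unfolding if_not_P[OF False] by (rule commutes_block_units_entry_eq_0[OF reg XU False])
    qed
  qed
qed

lemma commutant_block_alg:
  "regular_blocks bl ps cp pt \<Longrightarrow> commutant (block_alg bl ps cp) = block_alg bl cp ps"
  unfolding commutant_def using commutant_block_alg_subset block_alg_commute by blast

text \<open>A block algebra element is recognised by comparing its entries with those in one reference
  copy \<open>cp (ref b)\<close> of each block \<open>b\<close>; for concrete index sets this is a finite check.\<close>

definition determined_by_ref ::
    "('i \<Rightarrow> nat) \<Rightarrow> ('i \<Rightarrow> nat) \<Rightarrow> ('i \<Rightarrow> 'i \<Rightarrow> 'i) \<Rightarrow> (nat \<Rightarrow> 'i) \<Rightarrow> complex^'i^'i \<Rightarrow> bool" where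
  "determined_by_ref bl cp pt ref M \<longleftrightarrow> (\<forall>p q. M $ p $ q =
     (if bl p = bl q \<and> cp p = cp q then M $ pt p (ref (bl p)) $ pt q (ref (bl p)) else 0))"

lemma block_algI_ref:
  assumes reg: "regular_blocks bl ps cp pt" and ref: "\<And>p. bl (ref (bl p)) = bl p"
    and "determined_by_ref bl cp pt ref M"
  shows "M \<in> block_alg bl ps cp"
proof -
  note M = \<open>determined_by_ref bl cp pt ref M\<close>[unfolded determined_by_ref_def]
  define a where "a b x = (SOME p. bl p = b \<and> ps p = x)" for b x
  have a: "bl (a (bl p) (ps p)) = bl p \<and> ps (a (bl p) (ps p)) = ps p" for p
    unfolding a_def by (rule someI) simp
  have key: "pt (a (bl p) (ps p)) (ref (bl p)) = pt p (ref (bl p))" for p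
    using regular_blocks_pt[OF reg, of "a (bl p) (ps p)" "ref (bl p)"]
      regular_blocks_pt[OF reg, of p "ref (bl p)"] a[of p] ref[of p]
    by (intro regular_blocks_inj[OF reg]) simp_all
  show ?thesis
  proof (rule block_algI[where F = "\<lambda>b x y. M $ pt (a b x) (ref b) $ pt (a b y) (ref b)"])
    fix p q
    show "M $ p $ q = (if bl p = bl q \<and> cp p = cp q
        then M $ pt (a (bl p) (ps p)) (ref (bl p)) $ pt (a (bl p) (ps q)) (ref (bl p)) else 0)"
    proof (cases "bl p = bl q \<and> cp p = cp q")
      case True
      then have "pt (a (bl p) (ps q)) (ref (bl p)) = pt q (ref (bl p))" using key[of q] by simp
      then show ?thesis using M[rule_format, of p q] True key[of p] by simp
    next
      case False
      then show ?thesis using M[rule_format, of p q] unfolding if_not_P[OF False] by simp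
    qed
  qed
qed

lemma block_alg_cong:
  assumes "\<And>p q. bl' p = bl' q \<longleftrightarrow> bl p = bl q"
  shows "block_alg bl' ps cp = block_alg bl ps cp"
proof -
  have *: "M \<in> block_alg b2 ps cp"
    if M: "M \<in> block_alg b1 ps cp" and eq: "\<And>p q. b1 p = b1 q \<longleftrightarrow> b2 p = b2 q" for M b1 b2
  proof -
    obtain F where F: "\<And>p q. M $ p $ q = (if b1 p = b1 q \<and> cp p = cp q then F (b1 p) (ps p) (ps q) else 0)"
      using M by (rule block_algE) blast
    show ?thesis
    proof (rule block_algI[where F = "\<lambda>b x y. F (b1 (SOME p. b2 p = b)) x y"])
      fix p q
      have "b2 (SOME p'. b2 p' = b2 p) = b2 p" by (rule someI) simp
      then have s: "b1 (SOME p'. b2 p' = b2 p) = b1 p" using eq by blast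
      show "M $ p $ q = (if b2 p = b2 q \<and> cp p = cp q
          then F (b1 (SOME p'. b2 p' = b2 p)) (ps p) (ps q) else 0)"
      proof (cases "b2 p = b2 q \<and> cp p = cp q")
        case True
        then show ?thesis using F[of p q] eq[of p q] unfolding s by simp
      next
        case False
        then have n: "\<not> (b1 p = b1 q \<and> cp p = cp q)" using eq by blast
        show ?thesis using F[of p q] unfolding if_not_P[OF False] if_not_P[OF n] .
      qed
    qed
  qed
  show ?thesis using *[of _ bl bl'] *[of _ bl' bl] assms by blast
qed

lemma opp_in_block_alg:
  fixes bl :: "idx \<Rightarrow> nat"
  assumes "M \<in> block_alg bl ps cp"
  shows "opp M \<in> block_alg (bl \<circ> sw) (ps \<circ> sw) (cp \<circ> sw)"
proof -
  obtain F where F: "\<And>p q. M $ p $ q = (if bl p = bl q \<and> cp p = cp q then F (bl p) (ps p) (ps q) else 0)"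
    using assms by (rule block_algE) blast
  show ?thesis by (rule block_algI[where F = "\<lambda>b x y. F b y x"]) (auto simp: F opp_apply)
qed

lemma opp_image_block_alg:
  fixes bl :: "idx \<Rightarrow> nat"
  shows "opp ` block_alg bl ps cp = block_alg (bl \<circ> sw) (ps \<circ> sw) (cp \<circ> sw)"
proof
  show "block_alg (bl \<circ> sw) (ps \<circ> sw) (cp \<circ> sw) \<subseteq> opp ` block_alg bl ps cp"
  proof
    fix N assume "N \<in> block_alg (bl \<circ> sw) (ps \<circ> sw) (cp \<circ> sw)"
    then have "opp N \<in> block_alg (bl \<circ> sw \<circ> sw) (ps \<circ> sw \<circ> sw) (cp \<circ> sw \<circ> sw)"
      by (rule opp_in_block_alg)
    then have "opp N \<in> block_alg bl ps cp" by (simp add: comp_def)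
    then show "N \<in> opp ` block_alg bl ps cp" by (metis image_eqI opp_opp)
  qed
qed (use opp_in_block_alg in blast)

lemma hodge_if_ClD_eq_block_alg:
  fixes bl :: "idx \<Rightarrow> nat"
  assumes reg: "regular_blocks bl ps cp pt"
    and ps_sw: "ps \<circ> sw = cp" and cp_sw: "cp \<circ> sw = ps"
    and bl_sw: "\<And>p q. bl (sw p) = bl (sw q) \<longleftrightarrow> bl p = bl q"
    and ClD: "ClD D = block_alg bl ps cp"
  shows "hodge D"
proof -
  have "commutant (ClD D) = block_alg bl cp ps"
    unfolding ClD by (rule commutant_block_alg[OF reg])
  moreover have "opp ` ClD D = block_alg bl cp ps"
    unfolding ClD opp_image_block_alg ps_sw cp_sw by (rule block_alg_cong) (simp add: bl_sw)
  ultimately show ?thesis unfolding hodge_def by simp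
qed

definition diag_proj :: "idx set \<Rightarrow> op" where
  "diag_proj Q = (\<chi> p q. if p = q \<and> p \<in> Q then 1 else 0)"

lemma opp_diag_proj: "opp (diag_proj Q) = diag_proj (sw ` Q)"
proof -
  have "(sw q = sw p \<and> sw q \<in> Q) \<longleftrightarrow> (p = q \<and> p \<in> sw ` Q)" for p q
    by (metis image_iff sw_sw)
  then show ?thesis by (simp add: vec_eq_iff opp_apply diag_proj_def)
qed

lemma diag_proj_in_block_alg:
  assumes reg: "regular_blocks bl ps cp pt"
    and Q: "\<And>p r. p \<in> Q \<Longrightarrow> bl r = bl p \<Longrightarrow> cp r = cp p \<Longrightarrow> r \<in> Q"
  shows "diag_proj Q \<in> block_alg bl cp ps"
proof (rule block_algI[where F = "\<lambda>b c c'. if c = c' \<and> (\<exists>r\<in>Q. bl r = b \<and> cp r = c) then 1 else 0"])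
  fix p q
  show "diag_proj Q $ p $ q = (if bl p = bl q \<and> ps p = ps q
      then (if cp p = cp q \<and> (\<exists>r\<in>Q. bl r = bl p \<and> cp r = cp p) then 1 else 0) else 0)"
  proof (cases "p = q")
    case True
    have "(\<exists>r\<in>Q. bl r = bl p \<and> cp r = cp p) \<longleftrightarrow> p \<in> Q"
      using Q[of _ p] by auto
    then show ?thesis using True by (simp add: diag_proj_def)
  next
    case False
    then show ?thesis using regular_blocks_inj[OF reg, of p q] by (auto simp: diag_proj_def)
  qed
qed

lemma diag_proj_not_in_block_alg:
  assumes "q \<in> Q" "r \<notin> Q" "bl r = bl q" "ps r = ps q"
  shows "diag_proj Q \<notin> block_alg bl ps cp"
proof
  assume "diag_proj Q \<in> block_alg bl ps cp"
  then obtain F where F: "\<And>p p'. diag_proj Q $ p $ p' =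
      (if bl p = bl p' \<and> cp p = cp p' then F (bl p) (ps p) (ps p') else 0)"
    by (rule block_algE) blast
  have "diag_proj Q $ q $ q = diag_proj Q $ r $ r" using F[of q q] F[of r r] assms(3,4) by simp
  then show False using assms(1,2) by (simp add: diag_proj_def)
qed

text \<open>If \<open>Cl_D(A)\<close> lies in a block algebra \<open>B\<close>, a projection in the commutant of \<open>B\<close> is in
  \<open>Cl_D(A)'\<close>; if its opposite is not even in \<open>B\<close>, it is not in \<open>Cl_D(A)\<^sup>\<circ>\<close>.\<close>

lemma not_hodge_if_ClD_subset_block_alg:
  fixes bl :: "idx \<Rightarrow> nat"
  assumes reg: "regular_blocks bl ps cp pt" and sub: "ClD D \<subseteq> block_alg bl ps cp"
    and Q: "\<And>p r. p \<in> Q \<Longrightarrow> bl r = bl p \<Longrightarrow> cp r = cp p \<Longrightarrow> r \<in> Q"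
    and q: "q \<in> sw ` Q" and r: "r \<notin> sw ` Q" and "bl r = bl q" "ps r = ps q"
  shows "\<not> hodge D"
proof
  assume "hodge D"
  have "diag_proj Q \<in> commutant (block_alg bl ps cp)"
    unfolding commutant_block_alg[OF reg] by (rule diag_proj_in_block_alg[OF reg Q])
  then have "diag_proj Q \<in> commutant (ClD D)" using sub unfolding commutant_def by blast
  then obtain Y where "Y \<in> ClD D" "diag_proj Q = opp Y"
    using \<open>hodge D\<close> unfolding hodge_def by blast
  then have "opp (diag_proj Q) \<in> block_alg bl ps cp"
    using sub by (auto simp: opp_opp)
  then have "diag_proj (sw ` Q) \<in> block_alg bl ps cp"
    by (simp only: opp_diag_proj)
  then show False using diag_proj_not_in_block_alg[OF q r] assms(6,7) by blast
qed

section \<open>The algebra \<open>Cl_D(A)\<close>\<close>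

definition e_perp :: "complex^4^4" where
  "e_perp = mat 1 - emat 0 0"

definition alg_elt :: "complex \<Rightarrow> complex \<Rightarrow> complex \<Rightarrow> complex^4^4 \<Rightarrow> op" where
  "alg_elt l z w m = kron3 (diag1 l z w) (emat 0 0) (mat 1) + kron3 (diag2 l m) (emat 1 1) (mat 1)"

lemma algA_iff: "a \<in> algA \<longleftrightarrow> (\<exists>l z w m. a = alg_elt l z w m)"
  by (auto simp: algA_def alg_elt_def)

lemma alg_elt_in_algA: "alg_elt l z w m \<in> algA"
  by (auto simp: algA_iff)

lemmas m4_simps = matrix_mult_apply sum_UNIV_4 emat_apply smat_apply cadj_apply mat_1_apply e_perp_def
  diag1_def diag2_def Xmat_def Ymat_def cmat_def

lemmas entry_simps = kron3_apply emat_apply mat_1_apply e_perp_def diag1_def diag2_def Xmat_def Ymat_def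
  cmat_def vec_lambda_beta matrix_mult_apply sum_UNIV_4 sum_UNIV_2 smat_apply cadj_apply complex_cnj_zero
  complex_cnj_one mult_zero_left mult_zero_right mult_1_left mult_1_right add_0_left add_0_right diff_0
  diff_0_right minus_zero diff_self complex_cnj_cnj complex_cnj_minus vector_add_component
  vector_minus_component vector_uminus_component zero_index

lemma D0_eq: "D0 Xa Xb Y = kron3 Xa (emat 0 0) (emat 0 0) + kron3 Xb (emat 0 0) e_perp
    + kron3 Y (emat 0 1) (emat 0 0) + kron3 (cadj Y) (emat 1 0) (emat 0 0)"
  by (simp add: D0_def e_perp_def)

lemma Jconj_D0: "Jconj (D0 Xa Xb Y) = kron3 (emat 0 0) (emat 1 1) (cmat Xa) + kron3 e_perp (emat 1 1) (cmat Xb)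
    + kron3 (emat 0 0) (emat 1 0) (cmat Y) + kron3 (emat 0 0) (emat 0 1) (cmat (cadj Y))"
proof -
  have "cmat (emat i j) = emat i j" for i j :: 4
    by (simp add: vec_eq_iff cmat_def emat_apply)
  moreover have "cmat e_perp = e_perp"
    by (simp add: vec_eq_iff cmat_def e_perp_def emat_apply mat_1_apply)
  moreover have "flipc (emat 0 0) = emat 1 1" "flipc (emat 0 1) = emat 1 0" "flipc (emat 1 0) = emat 0 1"
    by (rule m2_eqI; auto simp: flipc_def emat_apply)+
  ultimately show ?thesis by (simp add: D0_eq Jconj_add Jconj_kron3)
qed

text \<open>The left tensor factors of \<open>J D\<^sub>0 J\<^sup>-\<^sup>1\<close> and \<open>D\<^sub>R\<close> are \<open>emat 0 0\<close> and \<open>e_perp\<close>, and both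
  diagonal blocks of an element of \<open>A\<close> start with the same \<open>\<lambda>\<close>; so both operators commute with \<open>A\<close>.\<close>

lemma diag_mult_emat_00:
  "diag1 l z w ** emat 0 0 = smat l (emat 0 0)" "emat 0 0 ** diag1 l z w = smat l (emat 0 0)"
  "diag2 l m ** emat 0 0 = smat l (emat 0 0)" "emat 0 0 ** diag2 l m = smat l (emat 0 0)"
  "diag2 l m ** e_perp = e_perp ** diag2 l m"
  by (rule m4_eqI; auto simp: m4_simps)+

lemma Jconj_D0_commute: "Jconj (D0 Xa Xb Y) ** alg_elt l z w m = alg_elt l z w m ** Jconj (D0 Xa Xb Y)"
  by (simp add: Jconj_D0 alg_elt_def kron3_simps diag_mult_emat_00 add_ac)

lemma DR_commute: "DR u ** alg_elt l z w m = alg_elt l z w m ** DR u"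
  by (simp add: DR_def alg_elt_def kron3_simps diag_mult_emat_00 add_ac)

definition commutator :: "op \<Rightarrow> op \<Rightarrow> op" where
  "commutator X Y = X ** Y - Y ** X"

lemma Dirac_commutator: "commutator (Dirac Xa Xb Y u) (alg_elt l z w m) = commutator (D0 Xa Xb Y) (alg_elt l z w m)"
  by (simp add: commutator_def Dirac_def matrix_add_ldistrib matrix_mult_add_right Jconj_D0_commute DR_commute)

lemma ClD_algA: "a \<in> algA \<Longrightarrow> a \<in> ClD D"
  and ClD_form: "a \<in> algA \<Longrightarrow> b \<in> algA \<Longrightarrow> a ** (D ** b - b ** D) \<in> ClD D"
  and ClD_add: "X \<in> ClD D \<Longrightarrow> Y \<in> ClD D \<Longrightarrow> X + Y \<in> ClD D"
  and ClD_smat: "X \<in> ClD D \<Longrightarrow> smat c X \<in> ClD D"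
  and ClD_mult: "X \<in> ClD D \<Longrightarrow> Y \<in> ClD D \<Longrightarrow> X ** Y \<in> ClD D"
  and ClD_cadj: "X \<in> ClD D \<Longrightarrow> cadj X \<in> ClD D"
  unfolding ClD_def
  by (blast intro: star_alg_gen.gen, blast intro: star_alg_gen.gen, (rule star_alg_gen.intros; assumption)+)

lemma ClD_diff: "X \<in> ClD D \<Longrightarrow> Y \<in> ClD D \<Longrightarrow> X - Y \<in> ClD D"
  unfolding smat_minus_1 by (intro ClD_add ClD_smat)

lemma ClD_zero: "0 \<in> ClD D"
  using ClD_smat[OF ClD_algA[OF alg_elt_in_algA], of 0] by (simp add: smat_0)

lemma ClD_sum: "finite A \<Longrightarrow> (\<And>x. x \<in> A \<Longrightarrow> f x \<in> ClD D) \<Longrightarrow> sum f A \<in> ClD D"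
  by (induction A rule: finite_induct) (auto intro: ClD_add ClD_zero)

lemma alg_elt_one: "alg_elt 1 1 0 (mat 1) = mat 1"
proof -
  have "diag1 1 1 0 = mat 1" "diag2 1 (mat 1) = mat 1"
    by (rule m4_eqI, elim insertE emptyE, simp_all only: enum_simps entry_simps)+
  moreover have "kron3 (mat 1) (emat 0 0) (mat 1) + kron3 (mat 1) (emat 1 1) (mat 1) = (mat 1 :: op)"
  proof (rule op_eqI)
    fix k i j k' i' j'
    show "(kron3 (mat 1) (emat 0 0) (mat 1) + kron3 (mat 1) (emat 1 1) (mat 1)) $ (k, i, j) $ (k', i', j')
        = (mat 1 :: op) $ (k, i, j) $ (k', i', j')"
      using exhaust_2[of k] exhaust_2[of k'] by (auto simp: kron3_apply mat_1_apply emat_apply)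
  qed
  ultimately show ?thesis by (simp add: alg_elt_def)
qed

lemma commutator_D0_alg_elt:
  "commutator (D0 Xa Xb Y) (alg_elt l z w m) =
      kron3 (Xa ** diag1 l z w - diag1 l z w ** Xa) (emat 0 0) (emat 0 0)
    + kron3 (Xb ** diag1 l z w - diag1 l z w ** Xb) (emat 0 0) e_perp
    + kron3 (Y ** diag2 l m - diag1 l z w ** Y) (emat 0 1) (emat 0 0)
    + kron3 (cadj Y ** diag1 l z w - diag2 l m ** cadj Y) (emat 1 0) (emat 0 0)"
  by (simp add: commutator_def D0_eq alg_elt_def kron3_simps kron3_diff1 algebra_simps)

lemma ClD_commutator: "commutator D (alg_elt l z w m) \<in> ClD D"
  using ClD_form[OF alg_elt_in_algA[of 1 1 0 "mat 1"] alg_elt_in_algA[of l z w m], where D = D]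
  by (simp add: alg_elt_one commutator_def)

lemma ClD_D0_commutator: "commutator (D0 Xa Xb Y) (alg_elt l z w m) \<in> ClD (Dirac Xa Xb Y u)"
  using ClD_commutator[of "Dirac Xa Xb Y u"] by (simp only: Dirac_commutator)

lemma ClD_Dirac_subset_block_alg:
  fixes bl :: "idx \<Rightarrow> nat"
  assumes reg: "regular_blocks bl ps cp pt" and ref: "\<And>p. bl (ref (bl p)) = bl p"
    and A: "\<And>l z w m. determined_by_ref bl cp pt ref (alg_elt l z w m)"
    and C: "\<And>l z w m. determined_by_ref bl cp pt ref (commutator (D0 Xa Xb Y) (alg_elt l z w m))"
  shows "ClD (Dirac Xa Xb Y u) \<subseteq> block_alg bl ps cp"
proof -
  have A': "alg_elt l z w m \<in> block_alg bl ps cp" for l z w m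
    by (rule block_algI_ref[OF reg ref A])
  have C': "commutator (D0 Xa Xb Y) (alg_elt l z w m) \<in> block_alg bl ps cp" for l z w m
    by (rule block_algI_ref[OF reg ref C])
  show ?thesis unfolding ClD_def
  proof (rule star_alg_gen_block_alg[OF reg], safe)
    fix a assume "a \<in> algA"
    then show "a \<in> block_alg bl ps cp" using A' by (auto simp: algA_iff)
  next
    fix a b assume "a \<in> algA" "b \<in> algA"
    then show "a ** (Dirac Xa Xb Y u ** b - b ** Dirac Xa Xb Y u) \<in> block_alg bl ps cp"
      using A' C' Dirac_commutator
      by (auto simp: algA_iff commutator_def intro: block_alg_mult[OF reg])
  qed
qed

lemma not_hodge_Dirac_by_blocks:
  fixes bl :: "idx \<Rightarrow> nat"
  assumes reg: "regular_blocks bl ps cp pt" and ref: "\<forall>p. bl (ref (bl p)) = bl p"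
    and A: "\<And>l z w m. determined_by_ref bl cp pt ref (alg_elt l z w m)"
    and C: "\<And>l z w m. determined_by_ref bl cp pt ref (commutator (D0 Xa Xb Y) (alg_elt l z w m))"
    and Q: "\<forall>p r. p \<in> Q \<longrightarrow> bl r = bl p \<longrightarrow> cp r = cp p \<longrightarrow> r \<in> Q"
    and "q \<in> sw ` Q" "r \<notin> sw ` Q" "bl r = bl q" "ps r = ps q"
  shows "\<not> hodge (Dirac Xa Xb Y u)"
proof (rule not_hodge_if_ClD_subset_block_alg[OF reg ClD_Dirac_subset_block_alg[OF reg ref[rule_format] A C]])
  show "\<And>p r. p \<in> Q \<Longrightarrow> bl r = bl p \<Longrightarrow> cp r = cp p \<Longrightarrow> r \<in> Q" using Q by blast
qed fact+

definition nat_of4 :: "4 \<Rightarrow> nat" where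
  "nat_of4 x = (if x = 0 then 0 else if x = 1 then 1 else if x = 2 then 2 else 3)"

section \<open>The generic case\<close>

(* Block 1 is M_4 on (1,0,0),
   (0,1,0), (0,2,0), (0,3,0); block 2 is M_4 (x) 1_3 on the (0,i,j) with j > 0; block 3 is
   C (x) 1_4 on (0,0,0) and the (1,0,j) with j > 0; block 4 is M_3 (x) 1_4 on the (1,i,j) with i > 0. *)
definition bl_gen :: "idx \<Rightarrow> nat" where
  "bl_gen p = (if fst p = 0 then (if snd (snd p) = 0 then (if fst (snd p) = 0 then 3 else 1) else 2)
               else (if fst (snd p) = 0 then (if snd (snd p) = 0 then 1 else 3) else 4))"
definition ps_gen :: "idx \<Rightarrow> nat" where
  "ps_gen p = (if bl_gen p = 3 then 0 else nat_of4 (fst (snd p)))"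
definition cp_gen :: "idx \<Rightarrow> nat" where
  "cp_gen p = (if bl_gen p = 1 then 0 else nat_of4 (snd (snd p)))"
definition pt_gen :: "idx \<Rightarrow> idx \<Rightarrow> idx" where
  "pt_gen p c = (if bl_gen p = 1 then p else if bl_gen p = 3 then c else (fst p, fst (snd p), snd (snd c)))"
definition ref_gen :: "nat \<Rightarrow> idx" where
  "ref_gen b = (if b = 1 then (0, 1, 0) else if b = 2 then (0, 0, 1) else if b = 3 then (0, 0, 0) else (1, 1, 0))"

lemmas gen_defs = bl_gen_def ps_gen_def cp_gen_def pt_gen_def ref_gen_def nat_of4_def

lemma regular_blocks_gen: "regular_blocks bl_gen ps_gen cp_gen pt_gen"
  unfolding regular_blocks_def
  by (intro conjI; rule idx_pair_cases_all, elim insertE emptyE, simp_all only: enum_simps gen_defs)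

lemma ClD_subset_block_alg_gen:
  "ClD (Dirac (Xmat 0 0 a23 a24) (Xmat b13 b14 b23 b24) (Ymat 0 0 0 d21 0 0 0) u)
     \<subseteq> block_alg bl_gen ps_gen cp_gen"
proof (rule ClD_Dirac_subset_block_alg[OF regular_blocks_gen, where ref = ref_gen])
  have "\<forall>p. bl_gen (ref_gen (bl_gen p)) = bl_gen p"
    by (rule idx_cases_all, elim insertE emptyE, simp_all only: enum_simps gen_defs)
  then show "bl_gen (ref_gen (bl_gen p)) = bl_gen p" for p by blast
  show "determined_by_ref bl_gen cp_gen pt_gen ref_gen (alg_elt l z w m)" for l z w m
    unfolding determined_by_ref_def
    by (rule idx_pair_cases_all, elim insertE emptyE, simp_all only: enum_simps entry_simps alg_elt_def gen_defs)
  show "determined_by_ref bl_gen cp_gen pt_gen ref_gen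
      (commutator (D0 (Xmat 0 0 a23 a24) (Xmat b13 b14 b23 b24) (Ymat 0 0 0 d21 0 0 0)) (alg_elt l z w m))"
    for l z w m
    unfolding commutator_D0_alg_elt determined_by_ref_def
    by (rule idx_pair_cases_all, elim insertE emptyE, simp_all only: enum_simps entry_simps gen_defs)
qed

lemma hodge_if_ClD_eq_block_alg_gen:
  assumes "ClD D = block_alg bl_gen ps_gen cp_gen"
  shows "hodge D"
proof (rule hodge_if_ClD_eq_block_alg[OF regular_blocks_gen _ _ _ assms])
  have "\<forall>p. ps_gen (sw p) = cp_gen p" "\<forall>p. cp_gen (sw p) = ps_gen p"
    by (rule idx_cases_all, elim insertE emptyE, simp_all only: enum_simps gen_defs sw_def)+
  then show "ps_gen \<circ> sw = cp_gen" "cp_gen \<circ> sw = ps_gen" by (simp_all add: fun_eq_iff)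
  have "\<forall>p q. bl_gen (sw p) = bl_gen (sw q) \<longleftrightarrow> bl_gen p = bl_gen q"
    by (rule idx_pair_cases_all, elim insertE emptyE, simp_all only: enum_simps gen_defs sw_def)
  then show "bl_gen (sw p) = bl_gen (sw q) \<longleftrightarrow> bl_gen p = bl_gen q" for p q by blast
qed

(* Block 1 consists of the indices (lk x, x, 0). *)
definition lk :: "4 \<Rightarrow> 2" where
  "lk x = (if x = 0 then 1 else 0)"

definition unit1 :: "4 \<Rightarrow> 4 \<Rightarrow> op" where
  "unit1 x y = kron3 (emat x y) (emat (lk x) (lk y)) (emat 0 0)"
definition unit2 :: "4 \<Rightarrow> 4 \<Rightarrow> op" where
  "unit2 x y = kron3 (emat x y) (emat 0 0) e_perp"
definition unit3 :: op where
  "unit3 = kron3 (emat 0 0) (emat 0 0) (emat 0 0) + kron3 (emat 0 0) (emat 1 1) e_perp"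
definition unit4 :: "4 \<Rightarrow> 4 \<Rightarrow> op" where
  "unit4 x y = kron3 (emat x y) (emat 1 1) (mat 1)"

lemma sum_1_2_3: "sum f {1, 2, 3 :: 4} = f 1 + f 2 + f 3"
  by (simp add: add.assoc)

lemma block_alg_gen_decomp:
  assumes "M \<in> block_alg bl_gen ps_gen cp_gen"
  shows "M = (\<Sum>x\<in>UNIV. \<Sum>y\<in>UNIV. smat (M $ (lk x, x, 0) $ (lk y, y, 0)) (unit1 x y))
     + (\<Sum>x\<in>UNIV. \<Sum>y\<in>UNIV. smat (M $ (0, x, 1) $ (0, y, 1)) (unit2 x y))
     + smat (M $ (0, 0, 0) $ (0, 0, 0)) unit3
     + (\<Sum>x\<in>{1, 2, 3}. \<Sum>y\<in>{1, 2, 3}. smat (M $ (1, x, 0) $ (1, y, 0)) (unit4 x y))"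
proof -
  obtain F where F: "\<And>p q. M $ p $ q =
      (if bl_gen p = bl_gen q \<and> cp_gen p = cp_gen q then F (bl_gen p) (ps_gen p) (ps_gen q) else 0)"
    using assms by (rule block_algE) blast
  have "\<forall>p q. M $ p $ q = ((\<Sum>x\<in>UNIV. \<Sum>y\<in>UNIV. smat (M $ (lk x, x, 0) $ (lk y, y, 0)) (unit1 x y))
     + (\<Sum>x\<in>UNIV. \<Sum>y\<in>UNIV. smat (M $ (0, x, 1) $ (0, y, 1)) (unit2 x y))
     + smat (M $ (0, 0, 0) $ (0, 0, 0)) unit3
     + (\<Sum>x\<in>{1, 2, 3}. \<Sum>y\<in>{1, 2, 3}. smat (M $ (1, x, 0) $ (1, y, 0)) (unit4 x y))) $ p $ q"
    by (rule idx_pair_cases_all, elim insertE emptyE,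
        simp_all only: F sum_UNIV_4 sum_1_2_3 unit1_def unit2_def unit3_def unit4_def lk_def
          enum_simps entry_simps gen_defs)
  then show ?thesis by (rule matrix_eqI)
qed

definition diag_left :: "complex^4^4 \<Rightarrow> complex^4^4 \<Rightarrow> op" where
  "diag_left x y = kron3 x (emat 0 0) (mat 1) + kron3 y (emat 1 1) (mat 1)"

lemma diag_left_add: "diag_left x y + diag_left x' y' = diag_left (x + x') (y + y')"
  by (simp add: diag_left_def kron3_add1 add_ac)

lemma smat_diag_left: "smat c (diag_left x y) = diag_left (smat c x) (smat c y)"
  by (simp add: diag_left_def kron3_smat1 smat_add)

lemma alg_elt_diag_left: "alg_elt l z w m = diag_left (diag1 l z w) (diag2 l m)"
  by (simp add: alg_elt_def diag_left_def)

text \<open>The projections onto the summands \<open>\<lambda>\<close>, \<open>\<lambda>\<close> conjugated, and the quaternion units become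
  available after complexification.\<close>

definition "lam_proj = diag_left (emat 0 0) (emat 0 0)"
definition "lam_bar_proj = diag_left (emat 1 1) 0"
definition "quat_unit x y = diag_left (emat x y) 0"

lemma lam_proj_eq: "lam_proj = smat (1/2) (alg_elt 1 0 0 0 + smat (- \<i>) (alg_elt \<i> 0 0 0))"
proof -
  have "smat (1/2) (diag1 1 0 0 + smat (- \<i>) (diag1 \<i> 0 0)) = emat 0 0"
    "smat (1/2) (diag2 1 0 + smat (- \<i>) (diag2 \<i> 0)) = emat 0 0"
    by (rule m4_eqI; auto simp: m4_simps)+
  then show ?thesis by (simp add: lam_proj_def alg_elt_diag_left diag_left_add smat_diag_left)
qed

lemma lam_bar_proj_eq: "lam_bar_proj = smat (1/2) (alg_elt 1 0 0 0 + smat \<i> (alg_elt \<i> 0 0 0))"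
proof -
  have "smat (1/2) (diag1 1 0 0 + smat \<i> (diag1 \<i> 0 0)) = emat 1 1"
    "smat (1/2) (diag2 1 0 + smat \<i> (diag2 \<i> 0)) = 0"
    by (rule m4_eqI; auto simp: m4_simps)+
  then show ?thesis by (simp add: lam_bar_proj_def alg_elt_diag_left diag_left_add smat_diag_left)
qed

lemma quat_unit_eq:
  "quat_unit 2 2 = smat (1/2) (alg_elt 0 1 0 0 + smat (- \<i>) (alg_elt 0 \<i> 0 0))"
  "quat_unit 3 3 = smat (1/2) (alg_elt 0 1 0 0 + smat \<i> (alg_elt 0 \<i> 0 0))"
  "quat_unit 2 3 = smat (1/2) (alg_elt 0 0 1 0 + smat (- \<i>) (alg_elt 0 0 \<i> 0))"
  "quat_unit 3 2 = smat (1/2) (smat (-1) (alg_elt 0 0 1 0) + smat (- \<i>) (alg_elt 0 0 \<i> 0))"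
proof -
  have "diag2 0 0 = 0"
    by (rule m4_eqI) (auto simp: m4_simps)
  moreover have "smat (1/2) (diag1 0 1 0 + smat (- \<i>) (diag1 0 \<i> 0)) = emat 2 2"
    "smat (1/2) (diag1 0 1 0 + smat \<i> (diag1 0 \<i> 0)) = emat 3 3"
    "smat (1/2) (diag1 0 0 1 + smat (- \<i>) (diag1 0 0 \<i>)) = emat 2 3"
    "smat (1/2) (smat (-1) (diag1 0 0 1) + smat (- \<i>) (diag1 0 0 \<i>)) = emat 3 2"
    by (rule m4_eqI; auto simp: m4_simps)+
  ultimately show
    "quat_unit 2 2 = smat (1/2) (alg_elt 0 1 0 0 + smat (- \<i>) (alg_elt 0 \<i> 0 0))"
    "quat_unit 3 3 = smat (1/2) (alg_elt 0 1 0 0 + smat \<i> (alg_elt 0 \<i> 0 0))"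
    "quat_unit 2 3 = smat (1/2) (alg_elt 0 0 1 0 + smat (- \<i>) (alg_elt 0 0 \<i> 0))"
    "quat_unit 3 2 = smat (1/2) (smat (-1) (alg_elt 0 0 1 0) + smat (- \<i>) (alg_elt 0 0 \<i> 0))"
    by (simp_all only: quat_unit_def alg_elt_diag_left diag_left_add smat_diag_left smat_zero add_0)
qed

lemma commutator_add: "commutator X (A + B) = commutator X A + commutator X B"
  by (simp add: commutator_def matrix_add_ldistrib matrix_mult_add_right)

lemma commutator_smat: "commutator X (smat c A) = smat c (commutator X A)"
  by (simp add: commutator_def smat_mult_left smat_mult_right smat_diff)

lemma sum_sq_cnj_neq_0:
  assumes "(a, b) \<noteq> (0::complex, 0)"
  shows "cnj a * a + cnj b * b \<noteq> 0"
proof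
  assume "cnj a * a + cnj b * b = 0"
  moreover have "cnj z * z = complex_of_real ((cmod z)\<^sup>2)" for z
    by (rule trans[OF mult.commute complex_norm_square[symmetric]])
  ultimately have "complex_of_real ((cmod a)\<^sup>2 + (cmod b)\<^sup>2) = 0"
    by (simp only: of_real_add)
  then have "(cmod a)\<^sup>2 + (cmod b)\<^sup>2 = 0"
    by (simp only: of_real_eq_0_iff)
  then show False
    using assms by (simp add: add_nonneg_eq_0_iff)
qed

lemma e_perp_simps:
  "e_perp ** e_perp = e_perp" "cadj e_perp = e_perp" "emat 0 0 ** e_perp = 0" "e_perp ** emat 0 0 = 0"
  by (rule m4_eqI; auto simp: m4_simps)+

lemmas product_simps = emat_mult_assoc mult_emat_assoc kron3_simps emat_mult_mult emat_mult_mult' times0_left times0_right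
  Xmat_def Ymat_def cadj_apply e_perp_simps

context
  fixes a23 a24 b13 b14 b23 b24 d21 :: complex
begin

abbreviation "D0_gen \<equiv> D0 (Xmat 0 0 a23 a24) (Xmat b13 b14 b23 b24) (Ymat 0 0 0 d21 0 0 0)"

lemma lam_bar_proj_commutator_lam_proj:
  "lam_bar_proj ** commutator D0_gen lam_proj = smat d21 (unit1 1 0)"
  by (simp add: commutator_def lam_proj_def lam_bar_proj_def diag_left_def D0_eq unit1_def lk_def product_simps)

lemma lam_bar_proj_commutator_quat:
  "lam_bar_proj ** commutator D0_gen (quat_unit 2 2 + quat_unit 3 3) =
     kron3 (smat a23 (emat 1 2) + smat a24 (emat 1 3)) (emat 0 0) (emat 0 0)
   + kron3 (smat b23 (emat 1 2) + smat b24 (emat 1 3)) (emat 0 0) e_perp"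
  by (simp add: commutator_def quat_unit_def lam_bar_proj_def diag_left_def D0_eq product_simps add_ac)

lemma lam_proj_commutator_quat:
  "lam_proj ** commutator D0_gen (quat_unit 2 2 + quat_unit 3 3) =
     kron3 (smat b13 (emat 0 2) + smat b14 (emat 0 3)) (emat 0 0) e_perp"
  by (simp add: commutator_def quat_unit_def lam_proj_def diag_left_def D0_eq product_simps add_ac)

end

lemma unit1_eq: "unit1 x y = cadj (unit1 1 x) ** unit1 1 y"
  by (simp add: unit1_def cadj_kron3 cadj_emat kron3_mult emat_mult lk_def)

lemma unit2_eq: "unit2 x y = cadj (unit2 1 x) ** unit2 1 y"
  by (simp add: unit2_def cadj_kron3 cadj_emat kron3_mult emat_mult e_perp_simps)

lemma unit2_1_0_eq: "unit2 1 0 = unit2 1 2 ** cadj (unit2 0 2)"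
  by (simp add: unit2_def cadj_kron3 cadj_emat kron3_mult emat_mult e_perp_simps)

lemma unit1_1_1_eq: "unit1 1 1 = unit1 1 0 ** cadj (unit1 1 0)"
  by (simp add: unit1_def lk_def cadj_kron3 cadj_emat kron3_mult emat_mult)

lemma unit2_1_1_eq: "unit2 1 1 = lam_bar_proj - unit1 1 1"
  by (simp add: lam_bar_proj_def diag_left_def unit1_def unit2_def lk_def e_perp_def kron3_diff3 kron3_zero1)

lemma unit3_eq: "unit3 = lam_proj - unit1 0 0 - unit2 0 0"
  by (simp add: lam_proj_def diag_left_def unit1_def unit2_def unit3_def lk_def e_perp_def kron3_diff3
      algebra_simps)

lemma unit4_eq: "x \<noteq> 0 \<Longrightarrow> y \<noteq> 0 \<Longrightarrow> unit4 x y = alg_elt 0 0 0 (emat x y)"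
proof -
  assume "x \<noteq> 0" "y \<noteq> 0"
  then have "diag2 0 (emat x y) = emat x y" by (auto simp: vec_eq_iff diag2_def emat_apply)
  moreover have "diag1 0 0 0 = 0" by (rule m4_eqI) (auto simp: m4_simps)
  ultimately show ?thesis by (simp add: unit4_def alg_elt_def kron3_zero1)
qed

lemma row_mult_quat_units:
  "kron3 (smat a (emat r 2) + smat b (emat r 3)) (emat 0 0) Z ** (smat (cnj a) (quat_unit 2 2) + smat (cnj b) (quat_unit 3 2))
     = smat (cnj a * a + cnj b * b) (kron3 (emat r 2) (emat 0 0) Z)"
  "kron3 (smat a (emat r 2) + smat b (emat r 3)) (emat 0 0) Z ** (smat (cnj a) (quat_unit 2 3) + smat (cnj b) (quat_unit 3 3))
     = smat (cnj a * a + cnj b * b) (kron3 (emat r 3) (emat 0 0) Z)"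
  by (simp_all add: quat_unit_def diag_left_def kron3_simps smat_smat smat_add_left mult.commute)

context
  fixes a23 a24 b13 b14 b23 b24 d21 u :: complex
  assumes d21: "d21 \<noteq> 0" and alpha: "(a23, a24) \<noteq> (0, 0)"
    and beta1: "(b13, b14) \<noteq> (0, 0)" and beta2: "(b23, b24) \<noteq> (0, 0)"
begin

abbreviation "Cl_gen \<equiv> ClD (Dirac (Xmat 0 0 a23 a24) (Xmat b13 b14 b23 b24) (Ymat 0 0 0 d21 0 0 0) u)"

lemma lam_proj_in_Cl: "lam_proj \<in> Cl_gen"
  and lam_bar_proj_in_Cl: "lam_bar_proj \<in> Cl_gen"
  and quat_unit_in_Cl: "quat_unit 2 2 \<in> Cl_gen" "quat_unit 3 3 \<in> Cl_gen"
    "quat_unit 2 3 \<in> Cl_gen" "quat_unit 3 2 \<in> Cl_gen"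
  unfolding lam_proj_eq lam_bar_proj_eq quat_unit_eq
  by (intro ClD_smat ClD_add ClD_algA alg_elt_in_algA)+

lemma commutator_lam_proj_in_Cl: "commutator (D0_gen a23 a24 b13 b14 b23 b24 d21) lam_proj \<in> Cl_gen"
  and commutator_quat_in_Cl:
    "commutator (D0_gen a23 a24 b13 b14 b23 b24 d21) (quat_unit 2 2 + quat_unit 3 3) \<in> Cl_gen"
  unfolding lam_proj_eq quat_unit_eq commutator_add commutator_smat
  by (intro ClD_smat ClD_add ClD_D0_commutator)+

lemma row_in_Cl:
  assumes "kron3 (smat a (emat r 2) + smat b (emat r 3)) (emat 0 0) Z \<in> Cl_gen" and "(a, b) \<noteq> (0, 0)"
  shows "kron3 (emat r 2) (emat 0 0) Z \<in> Cl_gen" "kron3 (emat r 3) (emat 0 0) Z \<in> Cl_gen"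
  using row_mult_quat_units[of a r b Z] smat_cancel[OF sum_sq_cnj_neq_0[OF assms(2)]]
    assms(1) quat_unit_in_Cl
  by (metis ClD_smat ClD_mult ClD_add)+

lemma unit1_1_0_in_Cl: "unit1 1 0 \<in> Cl_gen"
proof -
  have "smat d21 (unit1 1 0) \<in> Cl_gen"
    using ClD_mult[OF lam_bar_proj_in_Cl commutator_lam_proj_in_Cl]
    by (simp only: lam_bar_proj_commutator_lam_proj)
  then show ?thesis using ClD_smat smat_cancel[OF d21] by metis
qed

lemma unit1_1_1_in_Cl: "unit1 1 1 \<in> Cl_gen"
  unfolding unit1_1_1_eq by (intro ClD_mult ClD_cadj unit1_1_0_in_Cl)

lemma unit2_1_1_in_Cl: "unit2 1 1 \<in> Cl_gen"
  unfolding unit2_1_1_eq by (intro ClD_diff lam_bar_proj_in_Cl unit1_1_1_in_Cl)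

lemma units_from_rows:
  "unit1 1 2 \<in> Cl_gen" "unit1 1 3 \<in> Cl_gen"
  "unit2 1 2 \<in> Cl_gen" "unit2 1 3 \<in> Cl_gen"
  "unit2 0 2 \<in> Cl_gen" "unit2 0 3 \<in> Cl_gen"
proof -
  let ?W = "lam_bar_proj ** commutator (D0_gen a23 a24 b13 b14 b23 b24 d21) (quat_unit 2 2 + quat_unit 3 3)"
  have W: "?W \<in> Cl_gen" by (intro ClD_mult lam_bar_proj_in_Cl commutator_quat_in_Cl)
  have "unit1 1 1 ** ?W = kron3 (smat a23 (emat 1 2) + smat a24 (emat 1 3)) (emat 0 0) (emat 0 0)"
    by (simp add: lam_bar_proj_commutator_quat unit1_def lk_def kron3_simps e_perp_simps)
  then have "kron3 (smat a23 (emat 1 2) + smat a24 (emat 1 3)) (emat 0 0) (emat 0 0) \<in> Cl_gen"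
    using ClD_mult[OF unit1_1_1_in_Cl W] by simp
  then show "unit1 1 2 \<in> Cl_gen" "unit1 1 3 \<in> Cl_gen"
    using row_in_Cl[OF _ alpha] by (simp_all add: unit1_def lk_def)
  have "unit2 1 1 ** ?W = kron3 (smat b23 (emat 1 2) + smat b24 (emat 1 3)) (emat 0 0) e_perp"
    by (simp add: lam_bar_proj_commutator_quat unit2_def kron3_simps e_perp_simps)
  then have "kron3 (smat b23 (emat 1 2) + smat b24 (emat 1 3)) (emat 0 0) e_perp \<in> Cl_gen"
    using ClD_mult[OF unit2_1_1_in_Cl W] by simp
  then show "unit2 1 2 \<in> Cl_gen" "unit2 1 3 \<in> Cl_gen"
    using row_in_Cl[OF _ beta2] by (simp_all add: unit2_def)
  have "kron3 (smat b13 (emat 0 2) + smat b14 (emat 0 3)) (emat 0 0) e_perp \<in> Cl_gen"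
    using ClD_mult[OF lam_proj_in_Cl commutator_quat_in_Cl]
    by (simp only: lam_proj_commutator_quat)
  then show "unit2 0 2 \<in> Cl_gen" "unit2 0 3 \<in> Cl_gen"
    using row_in_Cl[OF _ beta1] by (simp_all add: unit2_def)
qed

lemma units_in_Cl:
  "unit1 x y \<in> Cl_gen" "unit2 x y \<in> Cl_gen" "unit3 \<in> Cl_gen"
  "x \<noteq> 0 \<Longrightarrow> y \<noteq> 0 \<Longrightarrow> unit4 x y \<in> Cl_gen"
proof -
  have x: "x \<in> {0, 1, 2, 3}" for x :: 4
    unfolding UNIV_4[symmetric] by simp
  have row1: "unit1 1 x \<in> Cl_gen" for x
    using x[of x] unit1_1_0_in_Cl unit1_1_1_in_Cl units_from_rows by auto
  show unit1: "unit1 x y \<in> Cl_gen" for x y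
    unfolding unit1_eq[of x y] by (intro ClD_mult ClD_cadj row1)
  have "unit2 1 0 \<in> Cl_gen"
    unfolding unit2_1_0_eq by (intro ClD_mult ClD_cadj units_from_rows)
  then have row2: "unit2 1 x \<in> Cl_gen" for x
    using x[of x] unit2_1_1_in_Cl units_from_rows by auto
  show unit2: "unit2 x y \<in> Cl_gen" for x y
    unfolding unit2_eq[of x y] by (intro ClD_mult ClD_cadj row2)
  show "unit3 \<in> Cl_gen"
    unfolding unit3_eq by (intro ClD_diff lam_proj_in_Cl unit1 unit2)
  show "x \<noteq> 0 \<Longrightarrow> y \<noteq> 0 \<Longrightarrow> unit4 x y \<in> Cl_gen"
    by (simp add: unit4_eq ClD_algA alg_elt_in_algA)
qed

lemma hodge_generic: "hodge (Dirac (Xmat 0 0 a23 a24) (Xmat b13 b14 b23 b24) (Ymat 0 0 0 d21 0 0 0) u)"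
proof (rule hodge_if_ClD_eq_block_alg_gen)
  have "block_alg bl_gen ps_gen cp_gen \<subseteq> Cl_gen"
  proof
    fix M assume "M \<in> block_alg bl_gen ps_gen cp_gen"
    then show "M \<in> Cl_gen"
      by (subst block_alg_gen_decomp) (auto intro!: ClD_add ClD_sum ClD_smat units_in_Cl)
  qed
  then show "Cl_gen = block_alg bl_gen ps_gen cp_gen"
    using ClD_subset_block_alg_gen by blast
qed

end

section \<open>The degenerate cases\<close>

subsection \<open>\<open>\<delta>\<^sub>2\<^sub>1 = 0\<close>\<close>

(* As in the generic case, but (1,0,0) becomes a fifth copy of block 3.  The projection onto
   (0,0,0) is then in the commutant, and its opposite, the projection onto (1,0,0), separates copies. *)
definition bl_delta :: "idx \<Rightarrow> nat" where
  "bl_delta p = (if fst p = 0 then (if snd (snd p) = 0 then (if fst (snd p) = 0 then 3 else 1) else 2)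
                 else (if fst (snd p) = 0 then 3 else 4))"
definition ps_delta :: "idx \<Rightarrow> nat" where
  "ps_delta p = (if bl_delta p = 3 then 0 else nat_of4 (fst (snd p)))"
definition cp_delta :: "idx \<Rightarrow> nat" where
  "cp_delta p = (if bl_delta p = 1 then 0
                 else if bl_delta p = 3 then (if fst p = 0 then 4 else nat_of4 (snd (snd p)))
                 else nat_of4 (snd (snd p)))"
definition pt_delta :: "idx \<Rightarrow> idx \<Rightarrow> idx" where
  "pt_delta p c = (if bl_delta p = 1 then p else if bl_delta p = 3 then c
                   else (fst p, fst (snd p), snd (snd c)))"
definition ref_delta :: "nat \<Rightarrow> idx" where
  "ref_delta b = (if b = 1 then (0, 1, 0) else if b = 2 then (0, 0, 1) else if b = 3 then (0, 0, 0) else (1, 1, 0))"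

lemmas delta_defs = bl_delta_def ps_delta_def cp_delta_def pt_delta_def ref_delta_def nat_of4_def

lemma not_hodge_delta21_zero:
  "\<not> hodge (Dirac (Xmat 0 0 a23 a24) (Xmat b13 b14 b23 b24) (Ymat 0 0 0 0 0 0 0) u)"
proof (rule not_hodge_Dirac_by_blocks[where bl = bl_delta and ps = ps_delta and cp = cp_delta
      and pt = pt_delta and ref = ref_delta and Q = "{(0, 0, 0)}" and q = "(1, 0, 0)" and r = "(1, 0, 1)"])
  show "regular_blocks bl_delta ps_delta cp_delta pt_delta"
    unfolding regular_blocks_def
    by (intro conjI; rule idx_pair_cases_all, elim insertE emptyE, simp_all only: enum_simps delta_defs)
  show "\<forall>p. bl_delta (ref_delta (bl_delta p)) = bl_delta p"
    by (rule idx_cases_all, elim insertE emptyE, simp_all only: enum_simps delta_defs)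
  show "determined_by_ref bl_delta cp_delta pt_delta ref_delta (alg_elt l z w m)" for l z w m
    unfolding determined_by_ref_def
    by (rule idx_pair_cases_all, elim insertE emptyE, simp_all only: enum_simps entry_simps alg_elt_def delta_defs)
  show "determined_by_ref bl_delta cp_delta pt_delta ref_delta
      (commutator (D0 (Xmat 0 0 a23 a24) (Xmat b13 b14 b23 b24) (Ymat 0 0 0 0 0 0 0)) (alg_elt l z w m))" for l z w m
    unfolding commutator_D0_alg_elt determined_by_ref_def
    by (rule idx_pair_cases_all, elim insertE emptyE, simp_all only: enum_simps entry_simps delta_defs)
  show "\<forall>p r. p \<in> {(0, 0, 0)} \<longrightarrow> bl_delta r = bl_delta p \<longrightarrow> cp_delta r = cp_delta p \<longrightarrow> r \<in> {(0, 0, 0)}"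
    by (rule idx_pair_cases_all, elim insertE emptyE, simp_all only: enum_simps delta_defs insert_iff empty_iff)
qed (simp_all add: sw_def delta_defs)

subsection \<open>\<open>\<alpha>\<^sub>2\<^sub>3 = \<alpha>\<^sub>2\<^sub>4 = 0\<close>\<close>

(* As in the generic case, but (0,2,0) and (0,3,0) leave block 1 and form a block 5 = M_2; the
   opposite of its unit separates the copies (1,0,2), (1,0,3) of block 3 from (1,0,1). *)
definition bl_alpha :: "idx \<Rightarrow> nat" where
  "bl_alpha p = (if fst p = 0 then (if snd (snd p) = 0
                   then (if fst (snd p) = 0 then 3 else if fst (snd p) = 1 then 1 else 5) else 2)
                 else (if fst (snd p) = 0 then (if snd (snd p) = 0 then 1 else 3) else 4))"
definition ps_alpha :: "idx \<Rightarrow> nat" where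
  "ps_alpha p = (if bl_alpha p = 3 then 0 else nat_of4 (fst (snd p)))"
definition cp_alpha :: "idx \<Rightarrow> nat" where
  "cp_alpha p = (if bl_alpha p = 1 \<or> bl_alpha p = 5 then 0 else nat_of4 (snd (snd p)))"
definition pt_alpha :: "idx \<Rightarrow> idx \<Rightarrow> idx" where
  "pt_alpha p c = (if bl_alpha p = 1 \<or> bl_alpha p = 5 then p else if bl_alpha p = 3 then c
                   else (fst p, fst (snd p), snd (snd c)))"
definition ref_alpha :: "nat \<Rightarrow> idx" where
  "ref_alpha b = (if b = 1 then (0, 1, 0) else if b = 5 then (0, 2, 0) else if b = 2 then (0, 0, 1)
                  else if b = 3 then (0, 0, 0) else (1, 1, 0))"

lemmas alpha_defs = bl_alpha_def ps_alpha_def cp_alpha_def pt_alpha_def ref_alpha_def nat_of4_def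

lemma not_hodge_alpha_zero:
  "\<not> hodge (Dirac (Xmat 0 0 0 0) (Xmat b13 b14 b23 b24) (Ymat 0 0 0 d21 0 0 0) u)"
proof (rule not_hodge_Dirac_by_blocks[where bl = bl_alpha and ps = ps_alpha and cp = cp_alpha
      and pt = pt_alpha and ref = ref_alpha and Q = "{(0, 2, 0), (0, 3, 0)}" and q = "(1, 0, 2)" and r = "(1, 0, 1)"])
  show "regular_blocks bl_alpha ps_alpha cp_alpha pt_alpha"
    unfolding regular_blocks_def
    by (intro conjI; rule idx_pair_cases_all, elim insertE emptyE, simp_all only: enum_simps alpha_defs)
  show "\<forall>p. bl_alpha (ref_alpha (bl_alpha p)) = bl_alpha p"
    by (rule idx_cases_all, elim insertE emptyE, simp_all only: enum_simps alpha_defs)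
  show "determined_by_ref bl_alpha cp_alpha pt_alpha ref_alpha (alg_elt l z w m)" for l z w m
    unfolding determined_by_ref_def
    by (rule idx_pair_cases_all, elim insertE emptyE, simp_all only: enum_simps entry_simps alg_elt_def alpha_defs)
  show "determined_by_ref bl_alpha cp_alpha pt_alpha ref_alpha
      (commutator (D0 (Xmat 0 0 0 0) (Xmat b13 b14 b23 b24) (Ymat 0 0 0 d21 0 0 0)) (alg_elt l z w m))" for l z w m
    unfolding commutator_D0_alg_elt determined_by_ref_def
    by (rule idx_pair_cases_all, elim insertE emptyE, simp_all only: enum_simps entry_simps alpha_defs)
  show "\<forall>p r. p \<in> {(0, 2, 0), (0, 3, 0)} \<longrightarrow> bl_alpha r = bl_alpha p \<longrightarrow> cp_alpha r = cp_alpha p \<longrightarrow> r \<in> {(0, 2, 0), (0, 3, 0)}"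
    by (rule idx_pair_cases_all, elim insertE emptyE, simp_all only: enum_simps alpha_defs insert_iff empty_iff)
qed (simp_all add: sw_def alpha_defs)

subsection \<open>\<open>\<beta>\<^sub>1\<^sub>3 = \<beta>\<^sub>1\<^sub>4 = 0\<close>\<close>

(* As in the generic case, but the (0,0,j) with j > 0 leave block 2 and become copies of block 3;
   the opposite of the projection onto (0,0,1) separates the copies (1,1,0), (1,1,1) of block 4. *)
definition bl_beta1 :: "idx \<Rightarrow> nat" where
  "bl_beta1 p = (if fst p = 0 then (if fst (snd p) = 0 then 3 else if snd (snd p) = 0 then 1 else 2)
                 else (if fst (snd p) = 0 then (if snd (snd p) = 0 then 1 else 3) else 4))"
definition ps_beta1 :: "idx \<Rightarrow> nat" where
  "ps_beta1 p = (if bl_beta1 p = 3 then 0 else nat_of4 (fst (snd p)))"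
definition cp_beta1 :: "idx \<Rightarrow> nat" where
  "cp_beta1 p = (if bl_beta1 p = 1 then 0
                 else if bl_beta1 p = 3 \<and> fst p = 0 then
                   (if snd (snd p) = 0 then 4 else if snd (snd p) = 1 then 5 else if snd (snd p) = 2 then 6 else 7)
                 else nat_of4 (snd (snd p)))"
definition pt_beta1 :: "idx \<Rightarrow> idx \<Rightarrow> idx" where
  "pt_beta1 p c = (if bl_beta1 p = 1 then p else if bl_beta1 p = 3 then c
                   else (fst p, fst (snd p), snd (snd c)))"
definition ref_beta1 :: "nat \<Rightarrow> idx" where
  "ref_beta1 b = (if b = 1 then (0, 1, 0) else if b = 2 then (0, 1, 1) else if b = 3 then (0, 0, 0)
                  else (1, 1, 0))"

lemmas beta1_defs = bl_beta1_def ps_beta1_def cp_beta1_def pt_beta1_def ref_beta1_def nat_of4_def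

lemma not_hodge_beta_row1_zero:
  "\<not> hodge (Dirac (Xmat 0 0 a23 a24) (Xmat 0 0 b23 b24) (Ymat 0 0 0 d21 0 0 0) u)"
proof (rule not_hodge_Dirac_by_blocks[where bl = bl_beta1 and ps = ps_beta1 and cp = cp_beta1
      and pt = pt_beta1 and ref = ref_beta1 and Q = "{(0, 0, 1)}" and q = "(1, 1, 0)" and r = "(1, 1, 1)"])
  show "regular_blocks bl_beta1 ps_beta1 cp_beta1 pt_beta1"
    unfolding regular_blocks_def
    by (intro conjI; rule idx_pair_cases_all, elim insertE emptyE, simp_all only: enum_simps beta1_defs)
  show "\<forall>p. bl_beta1 (ref_beta1 (bl_beta1 p)) = bl_beta1 p"
    by (rule idx_cases_all, elim insertE emptyE, simp_all only: enum_simps beta1_defs)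
  show "determined_by_ref bl_beta1 cp_beta1 pt_beta1 ref_beta1 (alg_elt l z w m)" for l z w m
    unfolding determined_by_ref_def
    by (rule idx_pair_cases_all, elim insertE emptyE, simp_all only: enum_simps entry_simps alg_elt_def beta1_defs)
  show "determined_by_ref bl_beta1 cp_beta1 pt_beta1 ref_beta1
      (commutator (D0 (Xmat 0 0 a23 a24) (Xmat 0 0 b23 b24) (Ymat 0 0 0 d21 0 0 0)) (alg_elt l z w m))" for l z w m
    unfolding commutator_D0_alg_elt determined_by_ref_def
    by (rule idx_pair_cases_all, elim insertE emptyE, simp_all only: enum_simps entry_simps beta1_defs)
  show "\<forall>p r. p \<in> {(0, 0, 1)} \<longrightarrow> bl_beta1 r = bl_beta1 p \<longrightarrow> cp_beta1 r = cp_beta1 p \<longrightarrow> r \<in> {(0, 0, 1)}"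
    by (rule idx_pair_cases_all, elim insertE emptyE, simp_all only: enum_simps beta1_defs insert_iff empty_iff)
qed (simp_all add: sw_def beta1_defs)

subsection \<open>\<open>\<beta>\<^sub>2\<^sub>3 = \<beta>\<^sub>2\<^sub>4 = 0\<close>\<close>

(* As in the generic case, but the (0,1,j) with j > 0 leave block 2 and form a block
   5 = C (x) 1_3; the opposite of the projection onto (0,1,1) separates copies of block 4. *)
definition bl_beta2 :: "idx \<Rightarrow> nat" where
  "bl_beta2 p = (if fst p = 0 then (if snd (snd p) = 0 then (if fst (snd p) = 0 then 3 else 1)
                                  else (if fst (snd p) = 1 then 5 else 2))
                 else (if fst (snd p) = 0 then (if snd (snd p) = 0 then 1 else 3) else 4))"
definition ps_beta2 :: "idx \<Rightarrow> nat" where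
  "ps_beta2 p = (if bl_beta2 p = 3 \<or> bl_beta2 p = 5 then 0 else nat_of4 (fst (snd p)))"
definition cp_beta2 :: "idx \<Rightarrow> nat" where
  "cp_beta2 p = (if bl_beta2 p = 1 then 0 else nat_of4 (snd (snd p)))"
definition pt_beta2 :: "idx \<Rightarrow> idx \<Rightarrow> idx" where
  "pt_beta2 p c = (if bl_beta2 p = 1 then p else if bl_beta2 p = 3 \<or> bl_beta2 p = 5 then c
                   else (fst p, fst (snd p), snd (snd c)))"
definition ref_beta2 :: "nat \<Rightarrow> idx" where
  "ref_beta2 b = (if b = 1 then (0, 1, 0) else if b = 2 then (0, 0, 1) else if b = 3 then (0, 0, 0)
                  else if b = 5 then (0, 1, 1) else (1, 1, 0))"

lemmas beta2_defs = bl_beta2_def ps_beta2_def cp_beta2_def pt_beta2_def ref_beta2_def nat_of4_def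

lemma not_hodge_beta_row2_zero:
  "\<not> hodge (Dirac (Xmat 0 0 a23 a24) (Xmat b13 b14 0 0) (Ymat 0 0 0 d21 0 0 0) u)"
proof (rule not_hodge_Dirac_by_blocks[where bl = bl_beta2 and ps = ps_beta2 and cp = cp_beta2
      and pt = pt_beta2 and ref = ref_beta2 and Q = "{(0, 1, 1)}" and q = "(1, 1, 1)" and r = "(1, 1, 0)"])
  show "regular_blocks bl_beta2 ps_beta2 cp_beta2 pt_beta2"
    unfolding regular_blocks_def
    by (intro conjI; rule idx_pair_cases_all, elim insertE emptyE, simp_all only: enum_simps beta2_defs)
  show "\<forall>p. bl_beta2 (ref_beta2 (bl_beta2 p)) = bl_beta2 p"
    by (rule idx_cases_all, elim insertE emptyE, simp_all only: enum_simps beta2_defs)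
  show "determined_by_ref bl_beta2 cp_beta2 pt_beta2 ref_beta2 (alg_elt l z w m)" for l z w m
    unfolding determined_by_ref_def
    by (rule idx_pair_cases_all, elim insertE emptyE, simp_all only: enum_simps entry_simps alg_elt_def beta2_defs)
  show "determined_by_ref bl_beta2 cp_beta2 pt_beta2 ref_beta2
      (commutator (D0 (Xmat 0 0 a23 a24) (Xmat b13 b14 0 0) (Ymat 0 0 0 d21 0 0 0)) (alg_elt l z w m))" for l z w m
    unfolding commutator_D0_alg_elt determined_by_ref_def
    by (rule idx_pair_cases_all, elim insertE emptyE, simp_all only: enum_simps entry_simps beta2_defs)
  show "\<forall>p r. p \<in> {(0, 1, 1)} \<longrightarrow> bl_beta2 r = bl_beta2 p \<longrightarrow> cp_beta2 r = cp_beta2 p \<longrightarrow> r \<in> {(0, 1, 1)}"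
    by (rule idx_pair_cases_all, elim insertE emptyE, simp_all only: enum_simps beta2_defs insert_iff empty_iff)
qed (simp_all add: sw_def beta2_defs)

theorem theorem17:
  fixes a13 a14 a23 a24 b13 b14 b23 b24 :: complex
    and d12 d13 d14 d21 d22 d23 d24 :: complex
    and Ups :: complex
  assumes "a13 = 0" and "a14 = 0"
    and "d12 = 0" and "d13 = 0" and "d14 = 0"
    and "d22 = 0" and "d23 = 0" and "d24 = 0"
  shows "hodge (Dirac (Xmat a13 a14 a23 a24) (Xmat b13 b14 b23 b24)
                       (Ymat d12 d13 d14 d21 d22 d23 d24) Ups)
     \<longleftrightarrow> d21 \<noteq> 0 \<and> (a23, a24) \<noteq> (0, 0) \<and> (b13, b14) \<noteq> (0, 0) \<and> (b23, b24) \<noteq> (0, 0)"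
  unfolding assms
proof
  assume hodge: "hodge (Dirac (Xmat 0 0 a23 a24) (Xmat b13 b14 b23 b24) (Ymat 0 0 0 d21 0 0 0) Ups)"
  show "d21 \<noteq> 0 \<and> (a23, a24) \<noteq> (0, 0) \<and> (b13, b14) \<noteq> (0, 0) \<and> (b23, b24) \<noteq> (0, 0)"
    using hodge not_hodge_delta21_zero not_hodge_alpha_zero not_hodge_beta_row1_zero not_hodge_beta_row2_zero
    by auto
qed (use hodge_generic in blast)

end
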